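(* Let $\mathbb{Q}^*_+$ act on the ring $\mathcal{A}_f$ of finite adeles by division, $r\cdot a=r^{-1}a$, and let $\mathcal{Q}(\mathcal{A}_f/\mathbb{Q}^*_+)$ be the quasi-orbit space of this action. For each $a\in\mathcal{A}_f$ define $S(a):=\{p\in\mathcal{P}: a_p=0\}$. Then $S(a)$ depends only on the quasi-orbit of $a$, and the map $a\mapsto S(a)$ induces a homeomorphism of $\mathcal{Q}(\mathcal{A}_f/\mathbb{Q}^*_+)$ onto the power set $2^{\mathcal{P}}$ equipped with the power-cofinite topology.
   Context: $\mathcal{P}$ is the set of prime numbers; $\mathcal{A}_f=\{(a_p)\in\prod_p\mathbb{Q}_p: a_p\in\mathbb{Z}_p \text{ for almost all } p\}$ is the ring of finite adeles with the restricted product topology (neighbourhood base at $0$ given by $\prod_{p\in F}V_p\times\prod_{p\notin F}\mathbb{Z}_p$, $F$ finite, $V_p$ a neighbourhood of $0$ in $\mathbb{Q}_p$), and $\mathbb{Q}$ is diagonally embedded. For a group $G$ acting on a space $X$, the quasi-orbit space $\mathcal{Q}(X/G)$ is the quotient of $X$ by the relation $x\sim y \iff \overline{G\cdot x}=\overline{G\cdot y}$, with the quotient topology. The power-cofinite topology on $2^{\mathcal{P}}$ has as basic open sets $U_G=\{T\subseteq\mathcal{P}: T\cap G=\emptyset\}$ for $G$ ranging over finite subsets of $\mathcal{P}$. *)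

theory Defs
  imports "HOL-Analysis.Analysis" "HOL-Computational_Algebra.Primes"
begin

definition pval :: "nat \<Rightarrow> rat \<Rightarrow> int" where
  "pval p r = (case quotient_of r of (a, b) \<Rightarrow>
      int (multiplicity (int p) a) - int (multiplicity (int p) b))"

definition pabs :: "nat \<Rightarrow> rat \<Rightarrow> real" where
  "pabs p r = (if r = 0 then 0 else real p powr (- real_of_int (pval p r)))"

definition p_cauchy :: "nat \<Rightarrow> (nat \<Rightarrow> rat) \<Rightarrow> bool" where
  "p_cauchy p s \<longleftrightarrow> (\<forall>e>0. \<exists>N. \<forall>m\<ge>N. \<forall>n\<ge>N. pabs p (s m - s n) < e)"

definition p_equiv :: "nat \<Rightarrow> (nat \<Rightarrow> rat) \<Rightarrow> (nat \<Rightarrow> rat) \<Rightarrow> bool" where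
  "p_equiv p s t \<longleftrightarrow> (\<lambda>n. pabs p (s n - t n)) \<longlonglongrightarrow> 0"

definition pclass :: "nat \<Rightarrow> (nat \<Rightarrow> rat) \<Rightarrow> (nat \<Rightarrow> rat) set" where
  "pclass p s = {t. p_cauchy p t \<and> p_equiv p s t}"

definition Qp :: "nat \<Rightarrow> (nat \<Rightarrow> rat) set set" where
  "Qp p = {X. \<exists>s. p_cauchy p s \<and> X = pclass p s}"

definition prep :: "(nat \<Rightarrow> rat) set \<Rightarrow> (nat \<Rightarrow> rat)" where
  "prep X = (SOME s. s \<in> X)"

definition pzero :: "nat \<Rightarrow> (nat \<Rightarrow> rat) set" where
  "pzero p = pclass p (\<lambda>n. 0)"

definition pconst :: "nat \<Rightarrow> rat \<Rightarrow> (nat \<Rightarrow> rat) set" where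
  "pconst p r = pclass p (\<lambda>n. r)"

definition padd :: "nat \<Rightarrow> (nat \<Rightarrow> rat) set \<Rightarrow> (nat \<Rightarrow> rat) set \<Rightarrow> (nat \<Rightarrow> rat) set" where
  "padd p X Y = pclass p (\<lambda>n. prep X n + prep Y n)"

definition pmul :: "nat \<Rightarrow> (nat \<Rightarrow> rat) set \<Rightarrow> (nat \<Rightarrow> rat) set \<Rightarrow> (nat \<Rightarrow> rat) set" where
  "pmul p X Y = pclass p (\<lambda>n. prep X n * prep Y n)"

definition pnorm :: "nat \<Rightarrow> (nat \<Rightarrow> rat) set \<Rightarrow> real" where
  "pnorm p X = lim (\<lambda>n. pabs p (prep X n))"

definition Zp :: "nat \<Rightarrow> (nat \<Rightarrow> rat) set set" where
  "Zp p = {X \<in> Qp p. pnorm p X \<le> 1}"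

definition qp_nhd0 :: "nat \<Rightarrow> (nat \<Rightarrow> rat) set set \<Rightarrow> bool" where
  "qp_nhd0 p V \<longleftrightarrow> V \<subseteq> Qp p \<and> (\<exists>e>0. {x \<in> Qp p. pnorm p x < e} \<subseteq> V)"

type_synonym adele = "nat \<Rightarrow> (nat \<Rightarrow> rat) set"

text \<open>Elements of prod_p Q_p indexed by primes; at non-primes the entry is fixed to the empty set.\<close>
definition Af :: "adele set" where
  "Af = {a. (\<forall>p. prime p \<longrightarrow> a p \<in> Qp p) \<and> (\<forall>p. \<not> prime p \<longrightarrow> a p = {})
            \<and> finite {p. prime p \<and> a p \<notin> Zp p}}"

definition af_add :: "adele \<Rightarrow> adele \<Rightarrow> adele" where
  "af_add a b = (\<lambda>p. if prime p then padd p (a p) (b p) else {})"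

definition af_mul :: "adele \<Rightarrow> adele \<Rightarrow> adele" where
  "af_mul a b = (\<lambda>p. if prime p then pmul p (a p) (b p) else {})"

definition af_diag :: "rat \<Rightarrow> adele" where
  "af_diag r = (\<lambda>p. if prime p then pconst p r else {})"

definition af_nbhd :: "nat set \<Rightarrow> (nat \<Rightarrow> (nat \<Rightarrow> rat) set set) \<Rightarrow> adele set" where
  "af_nbhd F V = {b \<in> Af. (\<forall>p\<in>F. b p \<in> V p) \<and> (\<forall>p. prime p \<and> p \<notin> F \<longrightarrow> b p \<in> Zp p)}"

text \<open>Restricted product topology (translates of the basic neighbourhoods of 0).\<close>
definition Af_top :: "adele topology" where
  "Af_top = topology (\<lambda>U. U \<subseteq> Af \<and>
     (\<forall>a\<in>U. \<exists>F V. finite F \<and> F \<subseteq> {p. prime p} \<and> (\<forall>p\<in>F. qp_nhd0 p (V p))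
        \<and> af_add a ` af_nbhd F V \<subseteq> U))"

definition div_action :: "rat \<Rightarrow> adele \<Rightarrow> adele" where
  "div_action r a = af_mul (af_diag (inverse r)) a"

definition S_zero :: "adele \<Rightarrow> nat set" where
  "S_zero a = {p. prime p \<and> a p = pzero p}"

definition qo_rel :: "'a topology \<Rightarrow> 'g set \<Rightarrow> ('g \<Rightarrow> 'a \<Rightarrow> 'a) \<Rightarrow> ('a \<times> 'a) set" where
  "qo_rel X G act = {(x, y). x \<in> topspace X \<and> y \<in> topspace X \<and>
      X closure_of ((\<lambda>g. act g x) ` G) = X closure_of ((\<lambda>g. act g y) ` G)}"

definition quasi_orbit_space :: "'a topology \<Rightarrow> 'g set \<Rightarrow> ('g \<Rightarrow> 'a \<Rightarrow> 'a) \<Rightarrow> 'a set topology" where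
  "quasi_orbit_space X G act = topology (\<lambda>W. W \<subseteq> topspace X // qo_rel X G act \<and> openin X (\<Union>W))"

definition power_cofinite :: "nat set topology" where
  "power_cofinite = topology (\<lambda>W. W \<subseteq> Pow {p. prime p} \<and>
     (\<forall>T\<in>W. \<exists>G. finite G \<and> G \<subseteq> {p. prime p} \<and> T \<inter> G = {} \<and>
        {T' \<in> Pow {p. prime p}. T' \<inter> G = {}} \<subseteq> W))"

end

theory Submission
  imports Defs
begin

text \<open>
  Scaling by a positive rational never changes which components of an adele vanish, and being
  nonzero at a given prime is an open condition; so every c in the orbit closure of a satisfies
  S(a) \<subseteq> S(c). Conversely, if S(a) \<subseteq> S(c), strong approximation for the rationals yields
  positive q with q a close to c at any finitely many primes and q integral at all other primes,
  hence c lies in the orbit closure of a. Therefore the quasi-orbits are exactly the fibres of S.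
  The map S is continuous, surjective and open onto the power-cofinite topology: a basic
  neighbourhood of a constrains only finitely many components, and at all remaining primes
  small perturbations can create or remove zeros at will. A continuous open surjection induces a
  homeomorphism from the quotient by its fibres.
\<close>

section \<open>Quotients by the fibres of an open map\<close>

lemma topspace_topology_eq:
  assumes "istopology P" "P A" "\<And>U. P U \<Longrightarrow> U \<subseteq> A"
  shows "topspace (topology P) = A"
  unfolding topspace_def using assms by auto

definition class_topology :: "'a topology \<Rightarrow> ('a \<times> 'a) set \<Rightarrow> 'a set topology" where
  "class_topology X R = topology (\<lambda>W. W \<subseteq> topspace X // R \<and> openin X (\<Union>W))"

lemma istopology_classes:
  assumes R: "equiv (topspace X) R"
  shows "istopology (\<lambda>W. W \<subseteq> topspace X // R \<and> openin X (\<Union>W))"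
  unfolding istopology_def
proof (rule conjI; intro allI impI)
  fix S T :: "'a set set"
  assume S: "S \<subseteq> topspace X // R \<and> openin X (\<Union>S)" and T: "T \<subseteq> topspace X // R \<and> openin X (\<Union>T)"
  have "\<Union>(S \<inter> T) = \<Union>S \<inter> \<Union>T"
    using S T quotient_disj[OF R] by blast
  thus "S \<inter> T \<subseteq> topspace X // R \<and> openin X (\<Union>(S \<inter> T))" using S T by auto
next
  fix K :: "'a set set set"
  assume "\<forall>W\<in>K. W \<subseteq> topspace X // R \<and> openin X (\<Union>W)"
  moreover have "\<Union>(\<Union>K) = \<Union>(Union ` K)" by blast
  ultimately show "\<Union>K \<subseteq> topspace X // R \<and> openin X (\<Union>(\<Union>K))" by auto
qed

lemma openin_class_topology:
  "equiv (topspace X) R \<Longrightarrow> openin (class_topology X R) W \<longleftrightarrow> W \<subseteq> topspace X // R \<and> openin X (\<Union>W)"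
  unfolding class_topology_def by (simp add: istopology_classes)

lemma topspace_class_topology:
  "equiv (topspace X) R \<Longrightarrow> topspace (class_topology X R) = topspace X // R"
  unfolding class_topology_def
  by (rule topspace_topology_eq[OF istopology_classes]) (auto simp: Union_quotient)

definition fibre_rel :: "'a topology \<Rightarrow> ('a \<Rightarrow> 'b) \<Rightarrow> ('a \<times> 'a) set" where
  "fibre_rel X f = {(a, b). a \<in> topspace X \<and> b \<in> topspace X \<and> f a = f b}"

lemma equiv_fibre_rel: "equiv (topspace X) (fibre_rel X f)"
  unfolding fibre_rel_def by (intro equivI refl_onI symI transI) auto

lemma fibre_rel_Image: "a \<in> topspace X \<Longrightarrow> fibre_rel X f `` {a} = {b \<in> topspace X. f b = f a}"
  unfolding fibre_rel_def by auto

lemma fibre_class_some: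
  assumes C: "C \<in> topspace X // fibre_rel X f" and a: "a \<in> C"
  shows "a \<in> topspace X" "f (SOME b. b \<in> C) = f a"
proof -
  from C obtain c where "c \<in> topspace X" "C = fibre_rel X f `` {c}" by (rule quotientE)
  hence c: "C = {b \<in> topspace X. f b = f c}" by (simp add: fibre_rel_Image)
  show "a \<in> topspace X" using a c by blast
  have "(SOME b. b \<in> C) \<in> C" using a by (rule someI)
  thus "f (SOME b. b \<in> C) = f a" using a c by simp
qed

lemma image_fibre_classes:
  assumes W: "W \<subseteq> topspace X // fibre_rel X f"
  shows "(\<lambda>C. f (SOME a. a \<in> C)) ` W = f ` \<Union>W"
proof (intro equalityI subsetI)
  fix y assume "y \<in> (\<lambda>C. f (SOME a. a \<in> C)) ` W"
  then obtain C where C: "C \<in> W" "y = f (SOME a. a \<in> C)" by blast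
  have Cq: "C \<in> topspace X // fibre_rel X f" using W C(1) by blast
  then obtain a where a: "a \<in> C" using in_quotient_imp_non_empty[OF equiv_fibre_rel] by blast
  hence "y = f a" using Cq C(2) fibre_class_some(2) by simp
  thus "y \<in> f ` \<Union>W" using a C(1) by blast
next
  fix y assume "y \<in> f ` \<Union>W"
  then obtain C a where C: "C \<in> W" "a \<in> C" "y = f a" by blast
  have "C \<in> topspace X // fibre_rel X f" using W C(1) by blast
  hence "y = f (SOME a. a \<in> C)" using C(2,3) fibre_class_some(2)[of C X f a] by simp
  thus "y \<in> (\<lambda>C. f (SOME a. a \<in> C)) ` W" using C(1) by blast
qed

lemma Union_fibre_classes_vimage:
  "\<Union>{C \<in> topspace X // fibre_rel X f. f (SOME a. a \<in> C) \<in> U} = {a \<in> topspace X. f a \<in> U}"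
proof (intro equalityI subsetI)
  fix a assume "a \<in> \<Union>{C \<in> topspace X // fibre_rel X f. f (SOME a. a \<in> C) \<in> U}"
  then obtain C where "C \<in> topspace X // fibre_rel X f" "f (SOME a. a \<in> C) \<in> U" "a \<in> C" by blast
  thus "a \<in> {a \<in> topspace X. f a \<in> U}" using fibre_class_some[of C X f a] by simp
next
  fix a assume a: "a \<in> {a \<in> topspace X. f a \<in> U}"
  let ?C = "fibre_rel X f `` {a}"
  have C: "?C \<in> topspace X // fibre_rel X f" by (rule quotientI) (use a in simp)
  moreover have "a \<in> ?C" using a by (simp add: fibre_rel_Image)
  moreover have "f (SOME b. b \<in> ?C) \<in> U" using a fibre_class_some(2)[OF C \<open>a \<in> ?C\<close>] by simp
  ultimately show "a \<in> \<Union>{C \<in> topspace X // fibre_rel X f. f (SOME a. a \<in> C) \<in> U}" by blast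
qed

lemma homeomorphic_map_fibre_classes:
  assumes "continuous_map X Y f" "open_map X Y f" "f ` topspace X = topspace Y"
  shows "homeomorphic_map (class_topology X (fibre_rel X f)) Y (\<lambda>C. f (SOME a. a \<in> C))"
proof (rule bijective_open_imp_homeomorphic_map)
  note R = equiv_fibre_rel[of X f]
  have onto: "(\<lambda>C. f (SOME a. a \<in> C)) ` topspace (class_topology X (fibre_rel X f)) = topspace Y"
    using image_fibre_classes[of "topspace X // fibre_rel X f" X f] assms(3)
    by (simp add: topspace_class_topology[OF R] Union_quotient[OF R])
  thus "continuous_map (class_topology X (fibre_rel X f)) Y (\<lambda>C. f (SOME a. a \<in> C))"
    using assms(1) unfolding continuous_map_def topspace_class_topology[OF R] openin_class_topology[OF R]
    by (auto simp: Union_fibre_classes_vimage)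
  show "open_map (class_topology X (fibre_rel X f)) Y (\<lambda>C. f (SOME a. a \<in> C))"
    using assms(2) image_fibre_classes[of _ X f] unfolding open_map_def openin_class_topology[OF R] by simp
  show "(\<lambda>C. f (SOME a. a \<in> C)) ` topspace (class_topology X (fibre_rel X f)) = topspace Y" by (fact onto)
  show "inj_on (\<lambda>C. f (SOME a. a \<in> C)) (topspace (class_topology X (fibre_rel X f)))"
    unfolding topspace_class_topology[OF R]
  proof (rule inj_onI)
    fix C D assume C: "C \<in> topspace X // fibre_rel X f" and D: "D \<in> topspace X // fibre_rel X f"
      and eq: "f (SOME a. a \<in> C) = f (SOME a. a \<in> D)"
    from C obtain a where a: "C = fibre_rel X f `` {a}" "a \<in> topspace X" by (rule quotientE)
    from D obtain b where b: "D = fibre_rel X f `` {b}" "b \<in> topspace X" by (rule quotientE)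
    have "a \<in> C" "b \<in> D" using a b by (simp_all add: fibre_rel_Image)
    hence "f a = f b" using eq fibre_class_some(2)[OF C] fibre_class_some(2)[OF D] by simp
    thus "C = D" using a b by (simp add: fibre_rel_Image)
  qed
qed

definition power_cofinite_open :: "'a set \<Rightarrow> 'a set set \<Rightarrow> bool" where
  "power_cofinite_open P W \<longleftrightarrow> W \<subseteq> Pow P \<and>
     (\<forall>T\<in>W. \<exists>G. finite G \<and> G \<subseteq> P \<and> T \<inter> G = {} \<and> {T' \<in> Pow P. T' \<inter> G = {}} \<subseteq> W)"

lemma power_cofinite_openD:
  assumes "power_cofinite_open P W" "X \<in> W"
  obtains G where "finite G" "G \<subseteq> P" "X \<inter> G = {}" "{T' \<in> Pow P. T' \<inter> G = {}} \<subseteq> W"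
proof -
  have "\<forall>T\<in>W. \<exists>G. finite G \<and> G \<subseteq> P \<and> T \<inter> G = {} \<and> {T' \<in> Pow P. T' \<inter> G = {}} \<subseteq> W"
    using assms(1) unfolding power_cofinite_open_def by (rule conjunct2)
  from bspec[OF this assms(2)] obtain G
    where "finite G \<and> G \<subseteq> P \<and> X \<inter> G = {} \<and> {T' \<in> Pow P. T' \<inter> G = {}} \<subseteq> W"
    by (rule exE)
  thus ?thesis by (elim conjE) (rule that)
qed

lemma power_cofinite_open_subset: "power_cofinite_open P W \<Longrightarrow> W \<subseteq> Pow P"
  unfolding power_cofinite_open_def by (rule conjunct1)

lemma power_cofinite_openI:
  assumes "W \<subseteq> Pow P"
    and "\<And>X. X \<in> W \<Longrightarrow> \<exists>G. finite G \<and> G \<subseteq> P \<and> X \<inter> G = {} \<and> {T' \<in> Pow P. T' \<inter> G = {}} \<subseteq> W"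
  shows "power_cofinite_open P W"
  unfolding power_cofinite_open_def using assms by (intro conjI ballI)

lemma istopology_power_cofinite_open: "istopology (power_cofinite_open P)"
  unfolding istopology_def
proof (rule conjI; intro allI impI)
  fix S T assume S: "power_cofinite_open P S" and T: "power_cofinite_open P T"
  show "power_cofinite_open P (S \<inter> T)"
  proof (rule power_cofinite_openI)
    show "S \<inter> T \<subseteq> Pow P" using power_cofinite_open_subset[OF S] by fast
    fix X assume X: "X \<in> S \<inter> T"
    obtain G1 where G1: "finite G1" "G1 \<subseteq> P" "X \<inter> G1 = {}" "{T' \<in> Pow P. T' \<inter> G1 = {}} \<subseteq> S"
      using S IntD1[OF X] by (rule power_cofinite_openD)
    obtain G2 where G2: "finite G2" "G2 \<subseteq> P" "X \<inter> G2 = {}" "{T' \<in> Pow P. T' \<inter> G2 = {}} \<subseteq> T"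
      using T IntD2[OF X] by (rule power_cofinite_openD)
    have "{T' \<in> Pow P. T' \<inter> (G1 \<union> G2) = {}} \<subseteq> S \<inter> T" using G1(4) G2(4) by fast
    moreover have "finite (G1 \<union> G2)" "G1 \<union> G2 \<subseteq> P" "X \<inter> (G1 \<union> G2) = {}" using G1 G2 by auto
    ultimately show "\<exists>G. finite G \<and> G \<subseteq> P \<and> X \<inter> G = {} \<and> {T' \<in> Pow P. T' \<inter> G = {}} \<subseteq> S \<inter> T"
      by (intro exI[of _ "G1 \<union> G2"]) simp
  qed
next
  fix K assume K: "\<forall>W\<in>K. power_cofinite_open P W"
  show "power_cofinite_open P (\<Union>K)"
  proof (rule power_cofinite_openI)
    show "\<Union>K \<subseteq> Pow P" using K power_cofinite_open_subset by fast
    fix X assume "X \<in> \<Union>K"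
    then obtain W where W: "W \<in> K" "X \<in> W" by blast
    obtain G where G: "finite G" "G \<subseteq> P" "X \<inter> G = {}" "{T' \<in> Pow P. T' \<inter> G = {}} \<subseteq> W"
      using K[rule_format, OF W(1)] W(2) by (rule power_cofinite_openD)
    have "{T' \<in> Pow P. T' \<inter> G = {}} \<subseteq> \<Union>K" using G(4) W(1) by fast
    thus "\<exists>G. finite G \<and> G \<subseteq> P \<and> X \<inter> G = {} \<and> {T' \<in> Pow P. T' \<inter> G = {}} \<subseteq> \<Union>K"
      using G(1-3) by (intro exI[of _ G]) simp
  qed
qed

lemma power_cofinite_eq: "power_cofinite = topology (power_cofinite_open {p. prime p})"
  unfolding power_cofinite_def power_cofinite_open_def[abs_def] ..

lemma openin_power_cofinite: "openin power_cofinite W \<longleftrightarrow> power_cofinite_open {p. prime p} W"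
  unfolding power_cofinite_eq by (simp add: istopology_power_cofinite_open)

lemma topspace_power_cofinite: "topspace power_cofinite = Pow {p. prime p}"
  unfolding power_cofinite_eq
proof (rule topspace_topology_eq[OF istopology_power_cofinite_open])
  show "power_cofinite_open {p. prime p} (Pow {p. prime p})"
    by (rule power_cofinite_openI) (auto intro!: exI[of _ "{}"])
qed (rule power_cofinite_open_subset)

lemma rat_int_fraction:
  fixes x :: rat
  obtains a b :: int where "b > 0" "x = of_int a / of_int b"
proof -
  obtain a b where q: "quotient_of x = (a, b)" by (cases "quotient_of x") auto
  show ?thesis using that[of b a] quotient_of_denom_pos[OF q] quotient_of_div[OF q] by blast
qed

lemma pval_of_int_divide:
  assumes p: "prime p" and a: "a \<noteq> 0" and b: "b \<noteq> 0"
  shows "pval p (of_int a / of_int b) = int (multiplicity (int p) a) - int (multiplicity (int p) b)"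
proof -
  obtain n d where q: "quotient_of (of_int a / of_int b) = (n, d)"
    by (cases "quotient_of (of_int a / of_int b :: rat)") auto
  have d: "d > 0" using q quotient_of_denom_pos by blast
  have r: "(of_int a / of_int b :: rat) = of_int n / of_int d" using q quotient_of_div by blast
  have n: "n \<noteq> 0" using r a b d by auto
  have "of_int (n * b) = (of_int (a * d) :: rat)" using r b d by (simp add: field_simps)
  hence "multiplicity (int p) (n * b) = multiplicity (int p) (a * d)" by (simp only: of_int_eq_iff)
  hence "multiplicity (int p) n + multiplicity (int p) b = multiplicity (int p) a + multiplicity (int p) d"
    using prime_elem_multiplicity_mult_distrib[of "int p"] p n a b d by simp
  thus ?thesis unfolding pval_def q by simp
qed

lemma pval_of_int: "prime p \<Longrightarrow> z \<noteq> 0 \<Longrightarrow> pval p (of_int z) = int (multiplicity (int p) z)"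
  using pval_of_int_divide[of p z 1] by simp

lemma pval_mult:
  assumes p: "prime p" and x: "x \<noteq> 0" and y: "y \<noteq> 0"
  shows "pval p (x * y) = pval p x + pval p y"
proof -
  obtain a b where ab: "b > 0" "x = of_int a / of_int b" by (rule rat_int_fraction)
  obtain c d where cd: "d > 0" "y = of_int c / of_int d" by (rule rat_int_fraction)
  have a: "a \<noteq> 0" and c: "c \<noteq> 0" using x ab y cd by auto
  have "x * y = of_int (a * c) / of_int (b * d)" using ab cd by simp
  thus ?thesis
    using pval_of_int_divide[OF p, of "a * c" "b * d"] pval_of_int_divide[OF p a, of b]
      pval_of_int_divide[OF p c, of d] ab cd a c
      prime_elem_multiplicity_mult_distrib[of "int p"] p by simp
qed

lemma multiplicity_add_ge:
  fixes u v :: "'a :: factorial_semiring"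
  assumes "u + v \<noteq> 0" "\<not> is_unit p"
  shows "multiplicity p (u + v) \<ge> min (multiplicity p u) (multiplicity p v)"
proof -
  let ?k = "min (multiplicity p u) (multiplicity p v)"
  have "p ^ ?k dvd u" "p ^ ?k dvd v" by (simp_all add: multiplicity_dvd')
  thus ?thesis using multiplicity_geI[OF assms] by simp
qed

lemma pval_add_ge:
  assumes p: "prime p" and x: "x \<noteq> 0" and y: "y \<noteq> 0" and xy: "x + y \<noteq> 0"
  shows "pval p (x + y) \<ge> min (pval p x) (pval p y)"
proof -
  obtain a b where ab: "b > 0" "x = of_int a / of_int b" by (rule rat_int_fraction)
  obtain c d where cd: "d > 0" "y = of_int c / of_int d" by (rule rat_int_fraction)
  have a: "a \<noteq> 0" and c: "c \<noteq> 0" using x ab y cd by auto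
  have sum: "x + y = of_int (a * d + c * b) / of_int (b * d)" using ab cd by (simp add: field_simps)
  have nz: "a * d + c * b \<noteq> 0"
  proof
    assume "a * d + c * b = 0"
    hence "(of_int (a * d + c * b) :: rat) = 0" by (simp only: of_int_0)
    thus False using xy sum by simp
  qed
  have pe: "prime_elem (int p)" and nu: "\<not> is_unit (int p)" using p by auto
  let ?m = "\<lambda>z. int (multiplicity (int p) z)"
  have "?m (a * d + c * b) \<ge> min (?m a + ?m d) (?m c + ?m b)"
    using multiplicity_add_ge[OF nz nu] prime_elem_multiplicity_mult_distrib[OF pe] a c ab cd by auto
  moreover have "pval p (x + y) = ?m (a * d + c * b) - (?m b + ?m d)"
    using pval_of_int_divide[OF p nz, of "b * d"] sum ab cd prime_elem_multiplicity_mult_distrib[OF pe]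
    by simp
  moreover have "pval p x = ?m a - ?m b" "pval p y = ?m c - ?m d"
    using pval_of_int_divide[OF p a] pval_of_int_divide[OF p c] ab cd by simp_all
  ultimately show ?thesis by linarith
qed

lemma pval_uminus: "prime p \<Longrightarrow> pval p (- x) = pval p x"
  using pval_mult[of p "-1" x] pval_of_int[of p "-1"] by (cases "x = 0") (simp_all add: multiplicity_unit_right)

lemma pabs_nonneg: "pabs p r \<ge> 0"
  unfolding pabs_def by simp

lemma pabs_0 [simp]: "pabs p 0 = 0"
  unfolding pabs_def by simp

lemma pabs_nonzero: "r \<noteq> 0 \<Longrightarrow> pabs p r = real p powr (- real_of_int (pval p r))"
  unfolding pabs_def by simp

lemma pabs_eq_0_iff [simp]: "prime p \<Longrightarrow> pabs p r = 0 \<longleftrightarrow> r = 0"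
  unfolding pabs_def using prime_gt_0_nat by simp

lemma pabs_mult: assumes p: "prime p" shows "pabs p (x * y) = pabs p x * pabs p y"
proof (cases "x = 0 \<or> y = 0")
  case False
  thus ?thesis using p pval_mult[OF p, of x y]
    by (simp add: pabs_nonzero powr_add[symmetric] algebra_simps)
qed auto

lemma pabs_1 [simp]: "prime p \<Longrightarrow> pabs p 1 = 1"
  using pval_of_int[of p 1] prime_gt_0_nat[of p] by (simp add: pabs_nonzero)

lemma pabs_uminus: "prime p \<Longrightarrow> pabs p (- x) = pabs p x"
  unfolding pabs_def using pval_uminus by simp

lemma pabs_minus_commute: "prime p \<Longrightarrow> pabs p (x - y) = pabs p (y - x)"
  using pabs_uminus[of p "x - y"] by simp

lemma pabs_add_le_max: assumes p: "prime p" shows "pabs p (x + y) \<le> max (pabs p x) (pabs p y)"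
proof (cases "x = 0 \<or> y = 0 \<or> x + y = 0")
  case False
  have p1: "real p \<ge> 1" using prime_gt_0_nat[OF p] by simp
  have "pval p x \<le> pval p (x + y) \<or> pval p y \<le> pval p (x + y)"
    using pval_add_ge[OF p] False by fastforce
  thus ?thesis using False p1 by (elim disjE) (simp_all add: pabs_nonzero powr_mono le_max_iff_disj)
qed (auto simp: pabs_nonneg le_max_iff_disj)

lemma pabs_diff_le_max: "prime p \<Longrightarrow> pabs p (x - y) \<le> max (pabs p x) (pabs p y)"
  using pabs_add_le_max[of p x "- y"] pabs_uminus[of p y] by simp

lemma pabs_triangle: "prime p \<Longrightarrow> pabs p (x + y) \<le> pabs p x + pabs p y"
  using pabs_add_le_max[of p x y] pabs_nonneg[of p] by (smt (verit))

lemma pabs_add_eq_left: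
  assumes p: "prime p" and "pabs p y < pabs p x"
  shows "pabs p (x + y) = pabs p x"
proof -
  have "pabs p x \<le> max (pabs p (x + y)) (pabs p y)" using pabs_diff_le_max[OF p, of "x + y" y] by simp
  thus ?thesis using pabs_add_le_max[OF p, of x y] assms by linarith
qed

lemma pabs_add_less: "prime p \<Longrightarrow> pabs p x < e \<Longrightarrow> pabs p y < e \<Longrightarrow> pabs p (x + y) < e"
  using pabs_add_le_max[of p x y] by simp

lemma pabs_add_le: "prime p \<Longrightarrow> pabs p x \<le> e \<Longrightarrow> pabs p y \<le> e \<Longrightarrow> pabs p (x + y) \<le> e"
  using pabs_add_le_max[of p x y] by simp

lemma pabs_abs_diff_le: assumes p: "prime p" shows "\<bar>pabs p x - pabs p y\<bar> \<le> pabs p (x - y)"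
  using pabs_triangle[OF p, of "x - y" y] pabs_triangle[OF p, of "y - x" x]
    pabs_minus_commute[OF p, of x y] by simp

lemma pabs_inverse: assumes p: "prime p" shows "pabs p (inverse x) = inverse (pabs p x)"
proof (cases "x = 0")
  case False
  hence "pabs p (inverse x) * pabs p x = 1" and "pabs p x \<noteq> 0"
    using pabs_mult[OF p, of "inverse x" x] p by simp_all
  thus ?thesis by (simp add: field_simps)
qed simp

lemma pabs_divide: "prime p \<Longrightarrow> pabs p (x / y) = pabs p x / pabs p y"
  by (simp add: divide_inverse pabs_mult pabs_inverse)

lemma pabs_scaled_diff_le:
  assumes p: "prime p" and "\<alpha> \<noteq> 0"
  shows "pabs p (q * s - t)
    \<le> max (max (pabs p q * pabs p (s - \<alpha>)) (pabs p \<alpha> * pabs p (q - \<gamma> / \<alpha>))) (pabs p (\<gamma> - t))"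
proof -
  have eq: "q * s - t = (q * (s - \<alpha>) + \<alpha> * (q - \<gamma> / \<alpha>)) + (\<gamma> - t)"
    using assms(2) by (simp add: field_simps)
  have "pabs p (q * s - t) \<le> max (pabs p (q * (s - \<alpha>) + \<alpha> * (q - \<gamma> / \<alpha>))) (pabs p (\<gamma> - t))"
    unfolding eq by (rule pabs_add_le_max[OF p])
  also have "\<dots> \<le> max (max (pabs p q * pabs p (s - \<alpha>)) (pabs p \<alpha> * pabs p (q - \<gamma> / \<alpha>))) (pabs p (\<gamma> - t))"
    using pabs_add_le_max[OF p, of "q * (s - \<alpha>)" "\<alpha> * (q - \<gamma> / \<alpha>)"] by (simp add: pabs_mult[OF p] max.coboundedI1)
  finally show ?thesis .
qed

lemma pabs_le_half_power:
  assumes p: "prime p" and k: "pval p r \<ge> int k"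
  shows "pabs p r \<le> (1/2) ^ k"
proof (cases "r = 0")
  case False
  have p2: "real p \<ge> 2" using prime_ge_2_nat[OF p] by simp
  have "pabs p r \<le> real p powr (- real k)"
    using k p2 by (simp add: pabs_nonzero[OF False] powr_mono)
  also have "\<dots> = inverse (real p ^ k)" using p2 by (simp add: powr_minus powr_realpow)
  also have "\<dots> \<le> inverse (2 ^ k)" using p2 by (simp add: le_imp_inverse_le power_mono)
  finally show ?thesis by (simp add: power_divide inverse_eq_divide)
qed simp

lemma pabs_of_int_le_half_power:
  assumes p: "prime p" and d: "int p ^ k dvd z"
  shows "pabs p (of_int z) \<le> (1/2) ^ k"
proof (cases "z = 0")
  case False
  have "multiplicity (int p) z \<ge> k"
    using multiplicity_geI[OF False _ d] p by (metis prime_nat_int_transfer not_prime_unit)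
  thus ?thesis using pabs_le_half_power[OF p] pval_of_int[OF p False] by simp
qed simp

lemma pabs_of_int_le_1: "prime p \<Longrightarrow> pabs p (of_int z) \<le> 1"
  using pabs_of_int_le_half_power[of p 0 z] by simp

lemma pabs_prime_power_other:
  assumes l: "prime l" and p: "prime p" and ne: "l \<noteq> p"
  shows "pabs l (of_nat p ^ j) = 1"
proof -
  have "\<not> l dvd p ^ j" using l p ne prime_dvd_power primes_dvd_imp_eq by blast
  hence "multiplicity (int l) (int p ^ j) = 0"
    by (metis not_dvd_imp_multiplicity_0 of_nat_dvd_iff of_nat_power)
  thus ?thesis using pval_of_int[OF l, of "int p ^ j"] p l by (simp add: pabs_nonzero prime_gt_0_nat)
qed

lemma pabs_prime_power_self: "prime p \<Longrightarrow> pabs p (of_nat p ^ k) \<le> (1/2) ^ k"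
  using pabs_of_int_le_half_power[of p k "int p ^ k"] by simp

section \<open>Approximation by rationals at finitely many primes\<close>

lemma exists_half_power_less:
  assumes "finite A" "\<forall>x\<in>A. (e x :: real) > 0"
  shows "\<exists>K. \<forall>x\<in>A. (1/2::real) ^ K < e x"
proof -
  have "\<forall>\<^sub>F K in sequentially. \<forall>x\<in>A. (1/2::real) ^ K < e x"
    using assms by (intro eventually_ball_finite ballI order_tendstoD(2)[OF LIMSEQ_power_zero]) auto
  thus ?thesis by (auto simp: eventually_sequentially)
qed

lemma pabs_of_int_prod_prime_powers:
  assumes "finite P" "x \<in> P" "prime x"
  shows "pabs x (of_int (N * (\<Prod>y\<in>P. int y ^ K))) \<le> (1/2) ^ K"
  using assms by (intro pabs_of_int_le_half_power dvd_mult dvd_prodI)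

lemma exists_rat_close_at_prime:
  assumes p: "prime p" and e: "e > 0"
  shows "\<exists>s::rat. pabs p (s - \<beta>) < e \<and> (\<forall>l. prime l \<and> l \<noteq> p \<longrightarrow> pabs l s \<le> 1)"
proof -
  have pe: "prime (int p)" and nu: "\<not> is_unit (int p)" using p by (auto simp: not_prime_unit)
  obtain u w :: int where w: "w > 0" and \<beta>: "\<beta> = of_int u / of_int w" by (rule rat_int_fraction)
  define j where "j = multiplicity (int p) w"
  obtain w' where w': "w = int p ^ j * w'" "\<not> int p dvd w'"
    using multiplicity_decompose'[of w "int p"] nu w unfolding j_def by auto
  have w'nz: "w' \<noteq> 0" using w w' by auto
  obtain k where k: "(1/2::real) ^ k < e" using real_arch_pow_inv[of e "1/2"] e by auto
  have "coprime (int p ^ (k + j)) w'" using prime_imp_coprime[OF pe w'(2)] by simp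
  then obtain x y where xy: "x * int p ^ (k + j) + y * w' = 1"
    using bezout_int[of "int p ^ (k + j)" w'] by (auto simp: coprime_iff_gcd_eq_1)
  \<comment> \<open>n is a solution of n w' = u modulo p^(k+j)\<close>
  define n where "n = y * u"
  have dvd: "int p ^ (k + j) dvd n * w' - u"
  proof -
    have "n * w' - u = u * (y * w' - 1)" unfolding n_def by (simp add: algebra_simps)
    also have "y * w' - 1 = - x * int p ^ (k + j)" using xy by linarith
    finally show ?thesis by simp
  qed
  define s :: rat where "s = of_int n / of_nat p ^ j"
  have diff: "s - \<beta> = of_int (n * w' - u) / of_int (int p ^ j * w')"
    unfolding s_def \<beta> using w' w'nz p prime_gt_0_nat by (simp add: field_simps)
  have "pabs p (s - \<beta>) \<le> (1/2) ^ k"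
  proof (cases "n * w' - u = 0")
    case False
    have "multiplicity (int p) (n * w' - u) \<ge> k + j" using multiplicity_geI[OF False nu dvd] .
    moreover have "multiplicity (int p) (int p ^ j * w') = j"
      using multiplicity_decomposeI[OF refl w'(2)] p by simp
    ultimately have "pval p (s - \<beta>) \<ge> int k"
      using pval_of_int_divide[OF p False, of "int p ^ j * w'"] diff w'nz p by simp
    thus ?thesis by (rule pabs_le_half_power[OF p])
  qed (simp add: diff)
  moreover have "pabs l s \<le> 1" if l: "prime l" "l \<noteq> p" for l
    unfolding s_def using pabs_divide[OF l(1)] pabs_prime_power_other[OF l(1) p l(2)]
      pabs_of_int_le_1[OF l(1)] by simp
  ultimately show ?thesis using k by (intro exI[of _ s]) fastforce
qed

lemma exists_rat_close_at_primes:
  assumes "finite P" "\<forall>p\<in>P. prime p" "\<forall>p\<in>P. (e p :: real) > 0"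
  shows "\<exists>q::rat. (\<forall>p\<in>P. pabs p (q - \<beta> p) < e p) \<and> (\<forall>l. prime l \<and> l \<notin> P \<longrightarrow> pabs l q \<le> 1)"
  using assms
proof (induction P rule: finite_induct)
  case empty
  show ?case by (intro exI[of _ 1]) simp
next
  case (insert p P)
  have p: "prime p" and ep: "e p > 0" using insert.prems by auto
  obtain q0 where q0: "\<forall>x\<in>P. pabs x (q0 - \<beta> x) < e x" "\<forall>l. prime l \<and> l \<notin> P \<longrightarrow> pabs l q0 \<le> 1"
    using insert by auto
  obtain K where K: "\<forall>x\<in>P. (1/2::real) ^ K < e x"
    using exists_half_power_less[of P e] insert.hyps(1) insert.prems by auto
  \<comment> \<open>a correction term divisible by M is p-adically small at every prime of P\<close>
  define M :: int where "M = (\<Prod>x\<in>P. int x ^ K)"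
  have Mnz: "M \<noteq> 0" unfolding M_def using insert prime_gt_0_nat by (auto simp: prod_zero_iff)
  obtain s where s: "pabs p (s - (\<beta> p - q0) / of_int M) < e p" "\<forall>l. prime l \<and> l \<noteq> p \<longrightarrow> pabs l s \<le> 1"
    using exists_rat_close_at_prime[OF p ep] by blast
  define q where "q = q0 + of_int M * s"
  have "q - \<beta> p = of_int M * (s - (\<beta> p - q0) / of_int M)"
    unfolding q_def using Mnz by (simp add: field_simps)
  hence "pabs p (q - \<beta> p) = pabs p (of_int M) * pabs p (s - (\<beta> p - q0) / of_int M)"
    using pabs_mult[OF p] by simp
  also have "\<dots> \<le> pabs p (s - (\<beta> p - q0) / of_int M)"
    using pabs_of_int_le_1[OF p, of M] pabs_nonneg[of p] by (simp add: mult_left_le_one_le)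
  finally have at_p: "pabs p (q - \<beta> p) < e p" using s(1) by simp
  have at_P: "pabs x (q - \<beta> x) < e x" if x: "x \<in> P" for x
  proof -
    have xp: "prime x" "x \<noteq> p" using x insert by auto
    have "pabs x (of_int M * s) \<le> pabs x (of_int M)"
      using s(2) xp pabs_mult[OF xp(1)] pabs_nonneg[of x] by (simp add: mult_left_le)
    also have "\<dots> \<le> (1/2) ^ K"
      using pabs_of_int_prod_prime_powers[OF insert(1) x xp(1), of 1] M_def by simp
    finally have "pabs x (of_int M * s) < e x" using K x by fastforce
    moreover have "q - \<beta> x = (q0 - \<beta> x) + of_int M * s" unfolding q_def by simp
    ultimately show ?thesis using pabs_add_less[OF xp(1)] q0(1) x by metis
  qed
  have "pabs l q \<le> 1" if l: "prime l" "l \<notin> insert p P" for l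
  proof -
    have "pabs l (of_int M * s) \<le> 1"
      using pabs_mult[OF l(1)] pabs_of_int_le_1[OF l(1), of M] s(2) l pabs_nonneg[of l]
      by (simp add: mult_le_one)
    thus ?thesis unfolding q_def using q0(2) l pabs_add_le[OF l(1)] by simp
  qed
  thus ?case using at_p at_P by (intro exI[of _ q]) auto
qed

lemma exists_pos_rat_close_at_primes:
  assumes "finite P" "\<forall>p\<in>P. prime p" "\<forall>p\<in>P. (e p :: real) > 0"
  shows "\<exists>q::rat. q > 0 \<and> (\<forall>p\<in>P. pabs p (q - \<beta> p) < e p) \<and> (\<forall>l. prime l \<and> l \<notin> P \<longrightarrow> pabs l q \<le> 1)"
proof -
  obtain q0 where q0: "\<forall>p\<in>P. pabs p (q0 - \<beta> p) < e p" "\<forall>l. prime l \<and> l \<notin> P \<longrightarrow> pabs l q0 \<le> 1"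
    using exists_rat_close_at_primes[OF assms] by blast
  obtain K where K: "\<forall>x\<in>P. (1/2::real) ^ K < e x" using exists_half_power_less[of P e] assms by auto
  define M :: int where "M = (\<Prod>x\<in>P. int x ^ K)"
  define N :: int where "N = \<lceil>\<bar>q0\<bar>\<rceil> + 1"
  have "M \<ge> 1" unfolding M_def using assms(2) by (auto intro!: prod_ge_1 one_le_power simp: Suc_le_eq prime_gt_0_nat)
  moreover have "N \<ge> 1" unfolding N_def by simp
  ultimately have "N * M \<ge> N" using mult_left_mono[of 1 M N] by simp
  hence "of_int (N * M) > \<bar>q0\<bar>" unfolding N_def by linarith
  define q where "q = q0 + of_int (N * M)"
  have "q > 0" unfolding q_def using \<open>of_int (N * M) > \<bar>q0\<bar>\<close> by linarith
  moreover have "pabs x (q - \<beta> x) < e x" if x: "x \<in> P" for x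
  proof -
    have xp: "prime x" using x assms by auto
    have "pabs x (of_int (N * M)) < e x"
      using pabs_of_int_prod_prime_powers[OF assms(1) x xp, of N K] K x unfolding M_def by fastforce
    moreover have "q - \<beta> x = (q0 - \<beta> x) + of_int (N * M)" unfolding q_def by simp
    ultimately show ?thesis using pabs_add_less[OF xp] q0(1) x by metis
  qed
  moreover have "pabs l q \<le> 1" if l: "prime l" "l \<notin> P" for l
    unfolding q_def using q0(2) l by (intro pabs_add_le pabs_of_int_le_1) auto
  ultimately show ?thesis by blast
qed

definition pneg :: "nat \<Rightarrow> (nat \<Rightarrow> rat) set \<Rightarrow> (nat \<Rightarrow> rat) set" where
  "pneg p X = pclass p (\<lambda>n. - prep X n)"

context
  fixes p :: nat
  assumes p: "prime p"
begin

lemma p_cauchy_const: "p_cauchy p (\<lambda>n. c)"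
  unfolding p_cauchy_def by simp

lemma p_cauchy_imp_Cauchy_pabs:
  assumes "p_cauchy p s"
  shows "Cauchy (\<lambda>n. pabs p (s n))"
proof (rule CauchyI)
  fix e :: real assume "e > 0"
  then obtain N where N: "\<forall>m\<ge>N. \<forall>n\<ge>N. pabs p (s m - s n) < e"
    using assms unfolding p_cauchy_def by blast
  have "norm (pabs p (s m) - pabs p (s n)) < e" if "m \<ge> N" "n \<ge> N" for m n
    using order_le_less_trans[OF pabs_abs_diff_le[OF p] N[rule_format, OF that]] by simp
  thus "\<exists>N. \<forall>m\<ge>N. \<forall>n\<ge>N. norm (pabs p (s m) - pabs p (s n)) < e" by blast
qed

lemma p_cauchy_bounded:
  assumes "p_cauchy p s"
  obtains B where "B > 0" "\<And>n. pabs p (s n) \<le> B"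
proof -
  have "Bseq (\<lambda>n. pabs p (s n))"
    using p_cauchy_imp_Cauchy_pabs[OF assms] Cauchy_convergent_iff convergent_imp_Bseq by blast
  then obtain B where "B > 0" "\<forall>n. norm (pabs p (s n)) \<le> B" by (rule BseqE)
  thus ?thesis using that pabs_nonneg[of p] by auto
qed

lemma p_cauchy_add:
  assumes s: "p_cauchy p s" and t: "p_cauchy p t"
  shows "p_cauchy p (\<lambda>n. s n + t n)"
  unfolding p_cauchy_def
proof (intro allI impI)
  fix e :: real assume "e > 0"
  then obtain N1 N2 where N1: "\<forall>m\<ge>N1. \<forall>n\<ge>N1. pabs p (s m - s n) < e"
    and N2: "\<forall>m\<ge>N2. \<forall>n\<ge>N2. pabs p (t m - t n) < e"
    using s t unfolding p_cauchy_def by meson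
  have "pabs p (s m + t m - (s n + t n)) < e" if "m \<ge> max N1 N2" "n \<ge> max N1 N2" for m n
    using pabs_add_less[OF p, of "s m - s n" e "t m - t n"] N1 N2 that by (simp add: algebra_simps)
  thus "\<exists>N. \<forall>m\<ge>N. \<forall>n\<ge>N. pabs p (s m + t m - (s n + t n)) < e" by blast
qed

lemma p_cauchy_uminus: "p_cauchy p s \<Longrightarrow> p_cauchy p (\<lambda>n. - s n)"
  unfolding p_cauchy_def using pabs_minus_commute[OF p] by simp

lemma p_cauchy_mult:
  assumes s: "p_cauchy p s" and t: "p_cauchy p t"
  shows "p_cauchy p (\<lambda>n. s n * t n)"
  unfolding p_cauchy_def
proof (intro allI impI)
  fix e :: real assume e: "e > 0"
  obtain Bs where Bs: "Bs > 0" "\<And>n. pabs p (s n) \<le> Bs" using p_cauchy_bounded[OF s] by blast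
  obtain Bt where Bt: "Bt > 0" "\<And>n. pabs p (t n) \<le> Bt" using p_cauchy_bounded[OF t] by blast
  obtain N1 where N1: "\<forall>m\<ge>N1. \<forall>n\<ge>N1. pabs p (t m - t n) < e / Bs"
    using t e Bs unfolding p_cauchy_def by (meson divide_pos_pos)
  obtain N2 where N2: "\<forall>m\<ge>N2. \<forall>n\<ge>N2. pabs p (s m - s n) < e / Bt"
    using s e Bt unfolding p_cauchy_def by (meson divide_pos_pos)
  have "pabs p (s m * t m - s n * t n) < e" if mn: "m \<ge> max N1 N2" "n \<ge> max N1 N2" for m n
  proof -
    have "pabs p (s m * (t m - t n)) < e"
    proof -
      have "pabs p (s m * (t m - t n)) \<le> Bs * pabs p (t m - t n)"
        using Bs pabs_mult[OF p] pabs_nonneg[of p] by (simp add: mult_right_mono)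
      also have "\<dots> < Bs * (e / Bs)" using Bs N1 mn by (intro mult_strict_left_mono) auto
      finally show ?thesis using Bs by simp
    qed
    moreover have "pabs p ((s m - s n) * t n) < e"
    proof -
      have "pabs p ((s m - s n) * t n) \<le> pabs p (s m - s n) * Bt"
        using Bt pabs_mult[OF p] pabs_nonneg[of p] by (simp add: mult_left_mono)
      also have "\<dots> < (e / Bt) * Bt" using Bt N2 mn by (intro mult_strict_right_mono) auto
      finally show ?thesis using Bt by simp
    qed
    ultimately have "pabs p (s m * (t m - t n) + (s m - s n) * t n) < e" by (rule pabs_add_less[OF p])
    thus ?thesis by (simp add: algebra_simps)
  qed
  thus "\<exists>N. \<forall>m\<ge>N. \<forall>n\<ge>N. pabs p (s m * t m - s n * t n) < e" by blast
qed

lemma p_equiv_refl: "p_equiv p s s"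
  unfolding p_equiv_def by simp

lemma p_equiv_sym: "p_equiv p s t \<Longrightarrow> p_equiv p t s"
  unfolding p_equiv_def using pabs_minus_commute[OF p] by simp

lemma p_equiv_by_bound:
  assumes "\<And>n. pabs p (s n - t n) \<le> g n" "g \<longlonglongrightarrow> 0"
  shows "p_equiv p s t"
  unfolding p_equiv_def
  by (rule Lim_null_comparison[OF _ assms(2)]) (use assms(1) pabs_nonneg[of p] in simp)

lemma p_equiv_trans:
  assumes "p_equiv p s t" "p_equiv p t u"
  shows "p_equiv p s u"
proof (rule p_equiv_by_bound)
  show "pabs p (s n - u n) \<le> pabs p (s n - t n) + pabs p (t n - u n)" for n
    using pabs_triangle[OF p, of "s n - t n" "t n - u n"] by simp
  show "(\<lambda>n. pabs p (s n - t n) + pabs p (t n - u n)) \<longlonglongrightarrow> 0"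
    using assms unfolding p_equiv_def by (rule tendsto_add_zero)
qed

lemma p_equiv_add:
  assumes "p_equiv p s s'" "p_equiv p t t'"
  shows "p_equiv p (\<lambda>n. s n + t n) (\<lambda>n. s' n + t' n)"
proof (rule p_equiv_by_bound)
  show "pabs p (s n + t n - (s' n + t' n)) \<le> pabs p (s n - s' n) + pabs p (t n - t' n)" for n
    using pabs_triangle[OF p, of "s n - s' n" "t n - t' n"] by (simp add: algebra_simps)
  show "(\<lambda>n. pabs p (s n - s' n) + pabs p (t n - t' n)) \<longlonglongrightarrow> 0"
    using assms unfolding p_equiv_def by (rule tendsto_add_zero)
qed

lemma p_equiv_mult:
  assumes "p_equiv p s s'" "p_equiv p t t'" "p_cauchy p s" "p_cauchy p t'"
  shows "p_equiv p (\<lambda>n. s n * t n) (\<lambda>n. s' n * t' n)"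
proof -
  obtain Bs where Bs: "\<And>n. pabs p (s n) \<le> Bs" using p_cauchy_bounded[OF assms(3)] by blast
  obtain Bt where Bt: "\<And>n. pabs p (t' n) \<le> Bt" using p_cauchy_bounded[OF assms(4)] by blast
  show ?thesis
  proof (rule p_equiv_by_bound)
    fix n
    have "pabs p (s n * (t n - t' n)) \<le> Bs * pabs p (t n - t' n)"
      using Bs[of n] pabs_mult[OF p] pabs_nonneg[of p] by (simp add: mult_right_mono)
    moreover have "pabs p ((s n - s' n) * t' n) \<le> Bt * pabs p (s n - s' n)"
      using Bt[of n] pabs_mult[OF p] pabs_nonneg[of p] by (simp add: mult_right_mono mult.commute)
    moreover have "s n * t n - s' n * t' n = s n * (t n - t' n) + (s n - s' n) * t' n"
      by (simp add: algebra_simps)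
    ultimately show "pabs p (s n * t n - s' n * t' n) \<le> Bs * pabs p (t n - t' n) + Bt * pabs p (s n - s' n)"
      using pabs_triangle[OF p, of "s n * (t n - t' n)" "(s n - s' n) * t' n"] by simp
    show "(\<lambda>n. Bs * pabs p (t n - t' n) + Bt * pabs p (s n - s' n)) \<longlonglongrightarrow> 0"
      using assms(1,2) unfolding p_equiv_def by (intro tendsto_add_zero tendsto_mult_right_zero)
  qed
qed

lemma pclass_eq_iff:
  assumes "p_cauchy p s" "p_cauchy p t"
  shows "pclass p s = pclass p t \<longleftrightarrow> p_equiv p s t"
  unfolding pclass_def using assms p_equiv_refl p_equiv_sym p_equiv_trans by blast

lemma prep_pclass:
  assumes "p_cauchy p s"
  shows "p_cauchy p (prep (pclass p s))" "p_equiv p (prep (pclass p s)) s"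
proof -
  have "prep (pclass p s) \<in> pclass p s"
    unfolding prep_def by (rule someI[of _ s]) (simp add: pclass_def assms p_equiv_refl)
  thus "p_cauchy p (prep (pclass p s))" "p_equiv p (prep (pclass p s)) s"
    unfolding pclass_def by (auto intro: p_equiv_sym)
qed

lemma Qp_prep:
  assumes "X \<in> Qp p"
  shows "p_cauchy p (prep X)" "pclass p (prep X) = X"
proof -
  obtain s where s: "p_cauchy p s" "X = pclass p s" using assms unfolding Qp_def by blast
  show "p_cauchy p (prep X)" using prep_pclass(1)[OF s(1)] s(2) by simp
  have "pclass p (prep (pclass p s)) = pclass p s"
    using prep_pclass[OF s(1)] pclass_eq_iff[OF _ s(1)] by blast
  thus "pclass p (prep X) = X" using s(2) by simp
qed

lemma pclass_in_Qp: "p_cauchy p s \<Longrightarrow> pclass p s \<in> Qp p"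
  unfolding Qp_def by blast

lemma padd_pclass:
  assumes "p_cauchy p s" "p_cauchy p t"
  shows "padd p (pclass p s) (pclass p t) = pclass p (\<lambda>n. s n + t n)"
  unfolding padd_def using assms prep_pclass
  by (subst pclass_eq_iff) (auto intro: p_cauchy_add p_equiv_add)

lemma pmul_pclass:
  assumes "p_cauchy p s" "p_cauchy p t"
  shows "pmul p (pclass p s) (pclass p t) = pclass p (\<lambda>n. s n * t n)"
  unfolding pmul_def using assms prep_pclass
  by (subst pclass_eq_iff) (auto intro: p_cauchy_mult p_equiv_mult)

lemma tendsto_pnorm_pclass:
  assumes s: "p_cauchy p s"
  shows "(\<lambda>n. pabs p (s n)) \<longlonglongrightarrow> pnorm p (pclass p s)"
proof -
  let ?t = "prep (pclass p s)"
  have t: "p_cauchy p ?t" "p_equiv p ?t s" using prep_pclass[OF s] by auto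
  have "(\<lambda>n. pabs p (?t n)) \<longlonglongrightarrow> pnorm p (pclass p s)"
    unfolding pnorm_def using p_cauchy_imp_Cauchy_pabs[OF t(1)] Cauchy_convergent convergent_LIMSEQ_iff
    by blast
  moreover have "(\<lambda>n. pabs p (s n) - pabs p (?t n)) \<longlonglongrightarrow> 0"
  proof (rule Lim_null_comparison)
    show "\<forall>\<^sub>F n in sequentially. norm (pabs p (s n) - pabs p (?t n)) \<le> pabs p (s n - ?t n)"
      using pabs_abs_diff_le[OF p] by simp
    show "(\<lambda>n. pabs p (s n - ?t n)) \<longlonglongrightarrow> 0" using p_equiv_sym[OF t(2)] unfolding p_equiv_def .
  qed
  ultimately show ?thesis using tendsto_add by fastforce
qed

lemma pnorm_pclass_le:
  assumes "p_cauchy p s" "g \<longlonglongrightarrow> L" "\<And>n. pabs p (s n) \<le> g n"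
  shows "pnorm p (pclass p s) \<le> L"
  using LIMSEQ_le[OF tendsto_pnorm_pclass[OF assms(1)] assms(2)] assms(3) by blast

lemma pnorm_nonneg: assumes "X \<in> Qp p" shows "pnorm p X \<ge> 0"
  using LIMSEQ_le_const[OF tendsto_pnorm_pclass[OF Qp_prep(1)[OF assms]]] pabs_nonneg[of p]
  by (auto simp: Qp_prep(2)[OF assms])

lemma pclass_eq_pzero_iff:
  assumes "p_cauchy p s"
  shows "pclass p s = pzero p \<longleftrightarrow> (\<lambda>n. pabs p (s n)) \<longlonglongrightarrow> 0"
  unfolding pzero_def using pclass_eq_iff[OF assms p_cauchy_const] by (simp add: p_equiv_def)

lemma pnorm_eq_0_iff:
  assumes "X \<in> Qp p"
  shows "pnorm p X = 0 \<longleftrightarrow> X = pzero p"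
  using tendsto_pnorm_pclass[OF Qp_prep(1)[OF assms]] pclass_eq_pzero_iff[OF Qp_prep(1)[OF assms]]
  by (auto simp: Qp_prep(2)[OF assms] LIMSEQ_unique)

lemma pnorm_pos: "X \<in> Qp p \<Longrightarrow> X \<noteq> pzero p \<Longrightarrow> pnorm p X > 0"
  using pnorm_nonneg pnorm_eq_0_iff by fastforce

lemma pzero_in_Qp: "pzero p \<in> Qp p"
  unfolding pzero_def using pclass_in_Qp p_cauchy_const by blast

lemma pconst_in_Qp: "pconst p r \<in> Qp p"
  unfolding pconst_def using pclass_in_Qp p_cauchy_const by blast

lemma pnorm_pconst: "pnorm p (pconst p r) = pabs p r"
  unfolding pconst_def using tendsto_pnorm_pclass[OF p_cauchy_const, of r] LIMSEQ_unique by auto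

lemma pnorm_pzero: "pnorm p (pzero p) = 0"
  using pnorm_pconst[of 0] unfolding pconst_def pzero_def by simp

lemma pconst_neq_pzero: "r \<noteq> 0 \<Longrightarrow> pconst p r \<noteq> pzero p"
  using pnorm_pconst[of r] pnorm_pzero p by auto

lemma eventually_pabs_eq_pnorm:
  assumes s: "p_cauchy p s" and nz: "pclass p s \<noteq> pzero p"
  shows "\<exists>N. \<forall>n\<ge>N. pabs p (s n) = pnorm p (pclass p s)"
proof -
  let ?L = "pnorm p (pclass p s)"
  have L: "(\<lambda>n. pabs p (s n)) \<longlonglongrightarrow> ?L" using tendsto_pnorm_pclass[OF s] .
  have "?L > 0" using pnorm_pos[OF pclass_in_Qp[OF s] nz] .
  then obtain N where N: "\<forall>m\<ge>N. \<forall>n\<ge>N. pabs p (s m - s n) < ?L / 2"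
    using s unfolding p_cauchy_def by (meson half_gt_zero)
  have large: "\<forall>\<^sub>F m in sequentially. pabs p (s m) > ?L / 2"
    using order_tendstoD(1)[OF L, of "?L / 2"] \<open>?L > 0\<close> by linarith
  have "pabs p (s n) = ?L" if n: "n \<ge> N" for n
  proof -
    \<comment> \<open>ultrametric: s n differs from the large s m by less than its absolute value\<close>
    have "\<forall>\<^sub>F m in sequentially. pabs p (s m) = pabs p (s n)"
      using large eventually_ge_at_top[of N]
    proof eventually_elim
      case (elim m)
      hence "pabs p (- (s m - s n)) < pabs p (s m)" using N n pabs_uminus[OF p] by fastforce
      thus ?case using pabs_add_eq_left[OF p] by fastforce
    qed
    hence "(\<lambda>m. pabs p (s m)) \<longlonglongrightarrow> pabs p (s n)" by (rule tendsto_eventually)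
    thus ?thesis using L LIMSEQ_unique by blast
  qed
  thus ?thesis by blast
qed

lemma pnorm_padd_le_max:
  assumes "X \<in> Qp p" "Y \<in> Qp p"
  shows "pnorm p (padd p X Y) \<le> max (pnorm p X) (pnorm p Y)"
  unfolding padd_def
proof (rule pnorm_pclass_le)
  note X = Qp_prep[OF assms(1)] and Y = Qp_prep[OF assms(2)]
  show "p_cauchy p (\<lambda>n. prep X n + prep Y n)" using X(1) Y(1) by (rule p_cauchy_add)
  show "(\<lambda>n. max (pabs p (prep X n)) (pabs p (prep Y n))) \<longlonglongrightarrow> max (pnorm p X) (pnorm p Y)"
    using tendsto_max[OF tendsto_pnorm_pclass[OF X(1)] tendsto_pnorm_pclass[OF Y(1)]] X(2) Y(2) by simp
qed (rule pabs_add_le_max[OF p])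

lemma padd_in_Qp: "X \<in> Qp p \<Longrightarrow> Y \<in> Qp p \<Longrightarrow> padd p X Y \<in> Qp p"
  unfolding padd_def by (intro pclass_in_Qp p_cauchy_add Qp_prep(1))

lemma padd_neq_pzero:
  assumes "X \<in> Qp p" "Y \<in> Qp p" "pnorm p Y < pnorm p X"
  shows "padd p X Y \<noteq> pzero p"
proof -
  note X = Qp_prep[OF assms(1)] and Y = Qp_prep[OF assms(2)]
  let ?u = "\<lambda>n. prep X n + prep Y n"
  have u: "p_cauchy p ?u" using X(1) Y(1) by (rule p_cauchy_add)
  have "pnorm p X \<le> pnorm p (pclass p ?u) + pnorm p Y"
    using LIMSEQ_le[OF tendsto_pnorm_pclass[OF X(1)]
        tendsto_add[OF tendsto_pnorm_pclass[OF u] tendsto_pnorm_pclass[OF Y(1)]]]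
      pabs_triangle[OF p, of "?u n" "- prep Y n" for n] pabs_uminus[OF p] X(2) Y(2)
    by fastforce
  hence "pnorm p (padd p X Y) \<noteq> 0" using assms(3) X Y by (simp add: padd_def)
  thus ?thesis using pnorm_pzero by auto
qed

lemma padd_pzero_right: "X \<in> Qp p \<Longrightarrow> padd p X (pzero p) = X"
  unfolding pzero_def using padd_pclass[OF Qp_prep(1) p_cauchy_const] Qp_prep(2) by fastforce

lemma padd_pzero_pconst: "padd p (pzero p) (pconst p c) = pconst p c"
  unfolding pzero_def pconst_def using padd_pclass[OF p_cauchy_const p_cauchy_const] by simp

lemma pmul_pconst_pzero: "pmul p (pconst p c) (pzero p) = pzero p"
  unfolding pconst_def pzero_def using pmul_pclass[OF p_cauchy_const p_cauchy_const] by simp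

lemma pneg_in_Qp: "X \<in> Qp p \<Longrightarrow> pneg p X \<in> Qp p"
  unfolding pneg_def by (intro pclass_in_Qp p_cauchy_uminus Qp_prep)

lemma padd_pneg: "X \<in> Qp p \<Longrightarrow> padd p X (pneg p X) = pzero p"
  unfolding pneg_def pzero_def
  using padd_pclass[OF Qp_prep(1) p_cauchy_uminus[OF Qp_prep(1)]] Qp_prep(2) by fastforce

lemma pnorm_pneg:
  assumes "X \<in> Qp p"
  shows "pnorm p (pneg p X) = pnorm p X"
proof -
  note X = Qp_prep[OF assms]
  have "(\<lambda>n. pabs p (- prep X n)) \<longlonglongrightarrow> pnorm p X"
    using tendsto_pnorm_pclass[OF X(1)] X(2) pabs_uminus[OF p] by simp
  thus ?thesis unfolding pneg_def using tendsto_pnorm_pclass[OF p_cauchy_uminus[OF X(1)]] LIMSEQ_unique by blast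
qed

lemma p_cauchy_scaled_diff: "p_cauchy p s \<Longrightarrow> p_cauchy p t \<Longrightarrow> p_cauchy p (\<lambda>n. q * s n - t n)"
  using p_cauchy_add[OF p_cauchy_mult[OF p_cauchy_const] p_cauchy_uminus] by simp

lemma padd_pclass_scaled_diff:
  assumes s: "p_cauchy p s" and t: "p_cauchy p t"
  shows "padd p (pclass p t) (pclass p (\<lambda>n. q * s n - t n)) = pmul p (pconst p q) (pclass p s)"
  unfolding pconst_def using padd_pclass[OF t p_cauchy_scaled_diff[OF s t]] pmul_pclass[OF p_cauchy_const s]
  by simp

lemma pnorm_scaled_diff_le:
  assumes s: "p_cauchy p s" and t: "p_cauchy p t"
  shows "pnorm p (pclass p (\<lambda>n. q * s n - t n)) \<le> max (pabs p q * pnorm p (pclass p s)) (pnorm p (pclass p t))"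
proof (rule pnorm_pclass_le)
  show "p_cauchy p (\<lambda>n. q * s n - t n)" using s t by (rule p_cauchy_scaled_diff)
  show "(\<lambda>n. max (pabs p q * pabs p (s n)) (pabs p (t n)))
      \<longlonglongrightarrow> max (pabs p q * pnorm p (pclass p s)) (pnorm p (pclass p t))"
    by (intro tendsto_max tendsto_mult_left tendsto_pnorm_pclass s t)
  show "pabs p (q * s n - t n) \<le> max (pabs p q * pabs p (s n)) (pabs p (t n))" for n
    using pabs_diff_le_max[OF p, of "q * s n" "t n"] pabs_mult[OF p] by simp
qed

lemma pnorm_scaled_diff_pzero:
  assumes "p_cauchy p s" "p_cauchy p t" "pclass p s = pzero p" "pclass p t = pzero p"
  shows "pnorm p (pclass p (\<lambda>n. q * s n - t n)) = 0"
  using pnorm_scaled_diff_le[OF assms(1,2), of q] assms(3,4) pnorm_nonneg[OF pclass_in_Qp]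
    p_cauchy_scaled_diff[OF assms(1,2)]
  by (simp add: pnorm_pzero) (meson order_antisym)

lemma pnorm_scaled_diff_le_1:
  assumes "p_cauchy p s" "p_cauchy p t" "pabs p q \<le> 1" "pnorm p (pclass p s) \<le> 1" "pnorm p (pclass p t) \<le> 1"
  shows "pnorm p (pclass p (\<lambda>n. q * s n - t n)) \<le> 1"
proof -
  have "pabs p q * pnorm p (pclass p s) \<le> 1"
    using assms(3,4) pabs_nonneg[of p q] pnorm_nonneg[OF pclass_in_Qp[OF assms(1)]] by (simp add: mult_le_one)
  thus ?thesis using pnorm_scaled_diff_le[OF assms(1,2), of q] assms(5) by linarith
qed

lemma exists_rat_scaled_diff_small:
  assumes s: "p_cauchy p s" and t: "p_cauchy p t" and nz: "pclass p s \<noteq> pzero p" and e: "\<epsilon> > 0"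
  shows "\<exists>\<beta> \<delta>. \<delta> > 0 \<and> (\<forall>q. pabs p (q - \<beta>) < \<delta> \<longrightarrow> pnorm p (pclass p (\<lambda>n. q * s n - t n)) < \<epsilon>)"
proof -
  let ?c = "pnorm p (pclass p s)"
  have c: "?c > 0" using pnorm_pos[OF pclass_in_Qp[OF s] nz] .
  \<comment> \<open>the centre will be t N / s N; since eventually pabs p (s n) = c, it is bounded independently of N\<close>
  obtain N0 where N0: "\<forall>n\<ge>N0. pabs p (s n) = ?c" using eventually_pabs_eq_pnorm[OF s nz] by blast
  obtain M where M: "\<And>n. pabs p (t n) \<le> M" using p_cauchy_bounded[OF t] by blast
  define Q where "Q = max (M / ?c) 1"
  define \<eta> where "\<eta> = \<epsilon> / (2 * Q)"
  have Q: "Q \<ge> 1" and eta: "\<eta> > 0" "Q * \<eta> = \<epsilon> / 2" "\<eta> \<le> \<epsilon> / 2"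
    unfolding Q_def \<eta>_def using e by (auto simp: field_simps)
  obtain N1 N2 where N1: "\<forall>m\<ge>N1. \<forall>n\<ge>N1. pabs p (s m - s n) < \<eta>"
    and N2: "\<forall>m\<ge>N2. \<forall>n\<ge>N2. pabs p (t m - t n) < \<eta>"
    using s t eta(1) unfolding p_cauchy_def by meson
  define N where "N = max N0 (max N1 N2)"
  define \<alpha> where "\<alpha> = s N"
  define \<gamma> where "\<gamma> = t N"
  have \<alpha>: "pabs p \<alpha> = ?c" unfolding \<alpha>_def N_def using N0 by simp
  hence \<alpha>nz: "\<alpha> \<noteq> 0" using c by auto
  define \<delta> where "\<delta> = min 1 (\<epsilon> / (2 * ?c))"
  have "pnorm p (pclass p (\<lambda>n. q * s n - t n)) < \<epsilon>" if q: "pabs p (q - \<gamma> / \<alpha>) < \<delta>" for q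
  proof -
    have "pabs p (\<gamma> / \<alpha>) \<le> M / ?c"
      using pabs_divide[OF p, of \<gamma> \<alpha>] \<alpha> M[of N] c unfolding \<gamma>_def by (simp add: divide_right_mono)
    moreover have "pabs p (q - \<gamma> / \<alpha>) \<le> 1" using q unfolding \<delta>_def by simp
    ultimately have qQ: "pabs p q \<le> Q"
      unfolding Q_def using pabs_add_le_max[OF p, of "\<gamma> / \<alpha>" "q - \<gamma> / \<alpha>"] by simp
    have "pabs p (q * s n - t n) \<le> \<epsilon> / 2" if n: "n \<ge> N" for n
    proof -
      have "pabs p q * pabs p (s n - \<alpha>) \<le> Q * \<eta>"
        using N1 n qQ Q pabs_nonneg[of p] unfolding \<alpha>_def N_def by (simp add: mult_mono less_imp_le)
      hence 1: "pabs p q * pabs p (s n - \<alpha>) \<le> \<epsilon> / 2" using eta by simp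
      have "pabs p \<alpha> * pabs p (q - \<gamma> / \<alpha>) \<le> ?c * (\<epsilon> / (2 * ?c))"
        unfolding \<alpha> using q c unfolding \<delta>_def by (intro mult_left_mono) auto
      hence 2: "pabs p \<alpha> * pabs p (q - \<gamma> / \<alpha>) \<le> \<epsilon> / 2" using c by simp
      have "pabs p (\<gamma> - t n) < \<eta>" using N2 n unfolding \<gamma>_def N_def by simp
      hence 3: "pabs p (\<gamma> - t n) \<le> \<epsilon> / 2" using eta by simp
      show ?thesis
        by (rule order_trans[OF pabs_scaled_diff_le[OF p \<alpha>nz] max.boundedI[OF max.boundedI[OF 1 2] 3]])
    qed
    hence "pnorm p (pclass p (\<lambda>n. q * s n - t n)) \<le> \<epsilon> / 2"
      by (intro LIMSEQ_le_const2[OF tendsto_pnorm_pclass[OF p_cauchy_scaled_diff[OF s t]]]) blast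
    thus ?thesis using e by simp
  qed
  moreover have "\<delta> > 0" unfolding \<delta>_def using e c by simp
  ultimately show ?thesis by blast
qed

end

lemma exists_pos_rat_scaled_diffs_small:
  assumes P: "finite P" "\<forall>p\<in>P. prime p"
    and st: "\<forall>p\<in>P. p_cauchy p (s p) \<and> p_cauchy p (t p) \<and> pclass p (s p) \<noteq> pzero p"
    and \<epsilon>: "\<forall>p\<in>P. \<epsilon> p > 0"
  shows "\<exists>q>0. (\<forall>p\<in>P. pnorm p (pclass p (\<lambda>n. q * s p n - t p n)) < \<epsilon> p)
               \<and> (\<forall>l. prime l \<and> l \<notin> P \<longrightarrow> pabs l q \<le> 1)"
proof -
  have "\<forall>p\<in>P. \<exists>\<beta> \<delta>. \<delta> > 0 \<and> (\<forall>q. pabs p (q - \<beta>) < \<delta> \<longrightarrow> pnorm p (pclass p (\<lambda>n. q * s p n - t p n)) < \<epsilon> p)"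
    using exists_rat_scaled_diff_small P(2) st \<epsilon> by blast
  from bchoice[OF this] obtain \<beta>
    where "\<forall>p\<in>P. \<exists>\<delta>. \<delta> > 0 \<and> (\<forall>q. pabs p (q - \<beta> p) < \<delta> \<longrightarrow> pnorm p (pclass p (\<lambda>n. q * s p n - t p n)) < \<epsilon> p)"
    by (rule exE)
  from bchoice[OF this] obtain \<delta>
    where \<beta>\<delta>: "\<forall>p\<in>P. \<delta> p > 0 \<and> (\<forall>q. pabs p (q - \<beta> p) < \<delta> p \<longrightarrow> pnorm p (pclass p (\<lambda>n. q * s p n - t p n)) < \<epsilon> p)"
    by (rule exE)
  obtain q where "q > 0" "\<forall>p\<in>P. pabs p (q - \<beta> p) < \<delta> p" "\<forall>l. prime l \<and> l \<notin> P \<longrightarrow> pabs l q \<le> 1"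
    using exists_pos_rat_close_at_primes[OF P, of \<delta> \<beta>] \<beta>\<delta> by blast
  thus ?thesis using \<beta>\<delta> by blast
qed

lemma Af_Qp: "a \<in> Af \<Longrightarrow> prime p \<Longrightarrow> a p \<in> Qp p"
  unfolding Af_def by blast

lemma Af_finite_nonintegral: "a \<in> Af \<Longrightarrow> finite {p. prime p \<and> a p \<notin> Zp p}"
  unfolding Af_def by blast

lemma AfI:
  assumes "\<And>p. prime p \<Longrightarrow> a p \<in> Qp p" "\<And>p. \<not> prime p \<Longrightarrow> a p = {}"
    and "finite {p. prime p \<and> a p \<notin> Zp p}"
  shows "a \<in> Af"
  unfolding Af_def using assms by blast

lemma af_add_prime: "prime p \<Longrightarrow> af_add a b p = padd p (a p) (b p)"
  unfolding af_add_def by simp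

lemma af_add_in_Af:
  assumes a: "a \<in> Af" and b: "b \<in> Af"
  shows "af_add a b \<in> Af"
proof (rule AfI)
  show "af_add a b p \<in> Qp p" if "prime p" for p
    using padd_in_Qp[OF that Af_Qp[OF a that] Af_Qp[OF b that]] af_add_prime[OF that] by simp
  show "af_add a b p = {}" if "\<not> prime p" for p
    unfolding af_add_def using that by simp
  have "af_add a b p \<in> Zp p" if "prime p" "a p \<in> Zp p" "b p \<in> Zp p" for p
    using that pnorm_padd_le_max[OF that(1) Af_Qp[OF a that(1)] Af_Qp[OF b that(1)]]
      padd_in_Qp[OF that(1) Af_Qp[OF a that(1)] Af_Qp[OF b that(1)]]
    by (auto simp: Zp_def af_add_prime max_def split: if_splits)
  hence "{p. prime p \<and> af_add a b p \<notin> Zp p} \<subseteq> {p. prime p \<and> a p \<notin> Zp p} \<union> {p. prime p \<and> b p \<notin> Zp p}"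
    by blast
  thus "finite {p. prime p \<and> af_add a b p \<notin> Zp p}"
    using Af_finite_nonintegral[OF a] Af_finite_nonintegral[OF b] by (rule finite_subset[OF _ finite_UnI])
qed

lemma af_nbhd_subset_Af: "af_nbhd F V \<subseteq> Af"
  unfolding af_nbhd_def by blast

lemma af_nbhd_mono:
  assumes "F' \<subseteq> F" "\<And>p. p \<in> F' \<Longrightarrow> V p \<subseteq> V' p" "\<And>p. p \<in> F - F' \<Longrightarrow> prime p \<Longrightarrow> V p \<subseteq> Zp p"
  shows "af_nbhd F V \<subseteq> af_nbhd F' V'"
  unfolding af_nbhd_def using assms by blast

lemma qp_nhd0_radii:
  assumes "\<forall>p\<in>F. qp_nhd0 p (V p)"
  obtains \<epsilon> where "\<forall>p\<in>F. \<epsilon> p > 0 \<and> {x \<in> Qp p. pnorm p x < \<epsilon> p} \<subseteq> V p"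
  using assms bchoice[of F "\<lambda>p e. e > 0 \<and> {x \<in> Qp p. pnorm p x < e} \<subseteq> V p"]
  unfolding qp_nhd0_def by blast

lemma af_nbhdI:
  assumes F: "F \<subseteq> {p. prime p}" "finite F"
    and \<epsilon>: "\<forall>p\<in>F. {x \<in> Qp p. pnorm p x < \<epsilon> p} \<subseteq> V p"
    and n: "\<And>p. prime p \<Longrightarrow> n p \<in> Qp p" "\<And>p. \<not> prime p \<Longrightarrow> n p = {}"
    and small: "\<And>p. p \<in> F \<Longrightarrow> pnorm p (n p) < \<epsilon> p" "\<And>p. prime p \<Longrightarrow> p \<notin> F \<Longrightarrow> pnorm p (n p) \<le> 1"
  shows "n \<in> af_nbhd F V"
proof -
  have Z: "n p \<in> Zp p" if "prime p" "p \<notin> F" for p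
    unfolding Zp_def using n(1) small(2) that by simp
  have "n \<in> Af"
  proof (rule AfI[OF n])
    show "finite {p. prime p \<and> n p \<notin> Zp p}" using Z F(2) by (blast intro: finite_subset)
  qed
  thus ?thesis unfolding af_nbhd_def using \<epsilon> n(1) small(1) Z F(1) by blast
qed

definition af_open :: "adele set \<Rightarrow> bool" where
  "af_open U \<longleftrightarrow> U \<subseteq> Af \<and>
     (\<forall>a\<in>U. \<exists>F V. finite F \<and> F \<subseteq> {p. prime p} \<and> (\<forall>p\<in>F. qp_nhd0 p (V p)) \<and> af_add a ` af_nbhd F V \<subseteq> U)"

lemma af_openD:
  assumes "af_open U" "a \<in> U"
  obtains F V where "finite F" "F \<subseteq> {p. prime p}" "\<forall>p\<in>F. qp_nhd0 p (V p)" "af_add a ` af_nbhd F V \<subseteq> U"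
proof -
  have "\<forall>a\<in>U. \<exists>F V. finite F \<and> F \<subseteq> {p. prime p} \<and> (\<forall>p\<in>F. qp_nhd0 p (V p)) \<and> af_add a ` af_nbhd F V \<subseteq> U"
    using assms(1) unfolding af_open_def by (rule conjunct2)
  from bspec[OF this assms(2)] obtain F V
    where "finite F \<and> F \<subseteq> {p. prime p} \<and> (\<forall>p\<in>F. qp_nhd0 p (V p)) \<and> af_add a ` af_nbhd F V \<subseteq> U"
    by (elim exE)
  thus ?thesis by (elim conjE) (rule that)
qed

lemma af_openI:
  assumes "U \<subseteq> Af"
    and "\<And>a. a \<in> U \<Longrightarrow> \<exists>F V. finite F \<and> F \<subseteq> {p. prime p} \<and> (\<forall>p\<in>F. qp_nhd0 p (V p)) \<and> af_add a ` af_nbhd F V \<subseteq> U"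
  shows "af_open U"
  unfolding af_open_def using assms by (intro conjI ballI)

lemma qp_nhd0_Zp: "qp_nhd0 p (Zp p)"
  unfolding qp_nhd0_def Zp_def by (auto intro: exI[of _ 1])

lemma qp_nhd0_Int:
  assumes "qp_nhd0 p A" "qp_nhd0 p B"
  shows "qp_nhd0 p (A \<inter> B)"
proof -
  obtain e1 e2 where "e1 > 0" "{x \<in> Qp p. pnorm p x < e1} \<subseteq> A" "e2 > 0" "{x \<in> Qp p. pnorm p x < e2} \<subseteq> B"
    using assms unfolding qp_nhd0_def by blast
  hence "min e1 e2 > 0" "{x \<in> Qp p. pnorm p x < min e1 e2} \<subseteq> A \<inter> B" by auto
  thus ?thesis using assms unfolding qp_nhd0_def by blast
qed

lemma istopology_af_open: "istopology af_open"
  unfolding istopology_def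
proof (rule conjI; intro allI impI)
  fix S T assume S: "af_open S" and T: "af_open T"
  show "af_open (S \<inter> T)"
  proof (rule af_openI)
    show "S \<inter> T \<subseteq> Af" using S unfolding af_open_def by fast
    fix a assume a: "a \<in> S \<inter> T"
    obtain F1 V1 where 1: "finite F1" "F1 \<subseteq> {p. prime p}" "\<forall>p\<in>F1. qp_nhd0 p (V1 p)" "af_add a ` af_nbhd F1 V1 \<subseteq> S"
      using S IntD1[OF a] by (rule af_openD)
    obtain F2 V2 where 2: "finite F2" "F2 \<subseteq> {p. prime p}" "\<forall>p\<in>F2. qp_nhd0 p (V2 p)" "af_add a ` af_nbhd F2 V2 \<subseteq> T"
      using T IntD2[OF a] by (rule af_openD)
    define V where "V p = (if p \<in> F1 then V1 p else Zp p) \<inter> (if p \<in> F2 then V2 p else Zp p)" for p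
    have "\<forall>p\<in>F1 \<union> F2. qp_nhd0 p (V p)"
      unfolding V_def using 1(3) 2(3) qp_nhd0_Zp by (auto intro!: qp_nhd0_Int)
    moreover have "af_nbhd (F1 \<union> F2) V \<subseteq> af_nbhd F1 V1" "af_nbhd (F1 \<union> F2) V \<subseteq> af_nbhd F2 V2"
      by (rule af_nbhd_mono; auto simp: V_def)+
    hence "af_add a ` af_nbhd (F1 \<union> F2) V \<subseteq> S \<inter> T" using 1(4) 2(4) by blast
    ultimately show "\<exists>F V. finite F \<and> F \<subseteq> {p. prime p} \<and> (\<forall>p\<in>F. qp_nhd0 p (V p)) \<and> af_add a ` af_nbhd F V \<subseteq> S \<inter> T"
      using 1(1,2) 2(1,2) by (intro exI[of _ "F1 \<union> F2"] exI[of _ V]) simp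
  qed
next
  fix K assume K: "\<forall>U\<in>K. af_open U"
  show "af_open (\<Union>K)"
  proof (rule af_openI)
    show "\<Union>K \<subseteq> Af" using K unfolding af_open_def by fast
    fix a assume "a \<in> \<Union>K"
    then obtain U where U: "U \<in> K" "a \<in> U" by blast
    obtain F V where "finite F" "F \<subseteq> {p. prime p}" "\<forall>p\<in>F. qp_nhd0 p (V p)" "af_add a ` af_nbhd F V \<subseteq> U"
      using K[rule_format, OF U(1)] U(2) by (rule af_openD)
    thus "\<exists>F V. finite F \<and> F \<subseteq> {p. prime p} \<and> (\<forall>p\<in>F. qp_nhd0 p (V p)) \<and> af_add a ` af_nbhd F V \<subseteq> \<Union>K"
      using U(1) by (intro exI[of _ F] exI[of _ V]) blast
  qed
qed

lemma Af_top_eq: "Af_top = topology af_open"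
  unfolding Af_top_def af_open_def[abs_def] ..

lemma openin_Af_top: "openin Af_top U \<longleftrightarrow> af_open U"
  unfolding Af_top_eq by (simp add: istopology_af_open)

lemma topspace_Af_top: "topspace Af_top = Af"
  unfolding Af_top_eq
proof (rule topspace_topology_eq[OF istopology_af_open])
  show "af_open Af"
  proof (rule af_openI)
    fix a assume "a \<in> Af"
    hence "af_add a ` af_nbhd {} (\<lambda>_. {}) \<subseteq> Af" using af_add_in_Af af_nbhd_subset_Af by blast
    thus "\<exists>F V. finite F \<and> F \<subseteq> {p. prime p} \<and> (\<forall>p\<in>F. qp_nhd0 p (V p)) \<and> af_add a ` af_nbhd F V \<subseteq> Af"
      by (intro exI[of _ "{}"] exI[of _ "\<lambda>_. {}"]) simp
  qed simp
qed (simp add: af_open_def)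

definition af_nonzero_at :: "nat set \<Rightarrow> adele set" where
  "af_nonzero_at G = {x \<in> Af. \<forall>p\<in>G. x p \<noteq> pzero p}"

lemma openin_af_nonzero_at:
  assumes G: "finite G" "G \<subseteq> {p. prime p}"
  shows "openin Af_top (af_nonzero_at G)"
  unfolding openin_Af_top
proof (rule af_openI)
  show "af_nonzero_at G \<subseteq> Af" unfolding af_nonzero_at_def by blast
  fix x assume x: "x \<in> af_nonzero_at G"
  hence xA: "x \<in> Af" unfolding af_nonzero_at_def by blast
  \<comment> \<open>adding something smaller than x p keeps the p-component nonzero\<close>
  define V where "V p = {y \<in> Qp p. pnorm p y < pnorm p (x p)}" for p
  have "qp_nhd0 p (V p)" if "p \<in> G" for p
    using that x G pnorm_pos[of p "x p"] Af_Qp[OF xA] unfolding qp_nhd0_def V_def af_nonzero_at_def by blast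
  moreover have "af_add x ` af_nbhd G V \<subseteq> af_nonzero_at G"
  proof
    fix z assume "z \<in> af_add x ` af_nbhd G V"
    then obtain n where n: "n \<in> af_nbhd G V" "z = af_add x n" by blast
    have nA: "n \<in> Af" using n af_nbhd_subset_Af by blast
    have "z p \<noteq> pzero p" if "p \<in> G" for p
    proof -
      have p: "prime p" using that G by blast
      have "pnorm p (n p) < pnorm p (x p)" using n that unfolding af_nbhd_def V_def by blast
      thus ?thesis using padd_neq_pzero[OF p Af_Qp[OF xA p] Af_Qp[OF nA p]] n(2) af_add_prime[OF p] by simp
    qed
    thus "z \<in> af_nonzero_at G" unfolding af_nonzero_at_def using af_add_in_Af[OF xA nA] n(2) by blast
  qed
  ultimately show "\<exists>F V. finite F \<and> F \<subseteq> {p. prime p} \<and> (\<forall>p\<in>F. qp_nhd0 p (V p)) \<and> af_add x ` af_nbhd F V \<subseteq> af_nonzero_at G"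
    using G by blast
qed

section \<open>Orbit closures\<close>

definition div_orbit :: "adele \<Rightarrow> adele set" where
  "div_orbit a = (\<lambda>r. div_action r a) ` {r::rat. r > 0}"

lemma div_action_prime: "prime p \<Longrightarrow> div_action r a p = pmul p (pconst p (inverse r)) (a p)"
  unfolding div_action_def af_mul_def af_diag_def by simp

lemma div_action_nonprime: "\<not> prime p \<Longrightarrow> div_action r a p = {}"
  unfolding div_action_def af_mul_def by simp

lemma S_zero_subset_primes: "S_zero a \<subseteq> {p. prime p}"
  unfolding S_zero_def by blast

lemma S_zero_subset_closure_div_orbit:
  assumes a: "a \<in> Af" and c: "c \<in> Af_top closure_of div_orbit a"
  shows "S_zero a \<subseteq> S_zero c"
proof
  fix p assume "p \<in> S_zero a"
  hence p: "prime p" and ap: "a p = pzero p" unfolding S_zero_def by auto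
  \<comment> \<open>the open set of adeles that are nonzero at p misses the whole orbit of a\<close>
  have "y \<notin> af_nonzero_at {p}" if y: "y \<in> div_orbit a" for y
  proof -
    obtain r where "y = div_action r a" using y unfolding div_orbit_def by blast
    hence "y p = pzero p" using div_action_prime[OF p] ap pmul_pconst_pzero[OF p] by simp
    thus ?thesis unfolding af_nonzero_at_def by simp
  qed
  hence "c \<notin> af_nonzero_at {p}"
    using c openin_af_nonzero_at[of "{p}"] p unfolding in_closure_of by blast
  moreover have "c \<in> Af" using c in_closure_of topspace_Af_top by metis
  ultimately show "p \<in> S_zero c" unfolding af_nonzero_at_def S_zero_def using p by simp
qed

definition af_scaled_diff :: "rat \<Rightarrow> adele \<Rightarrow> adele \<Rightarrow> adele" where
  "af_scaled_diff q a c = (\<lambda>p. if prime p then pclass p (\<lambda>n. q * prep (a p) n - prep (c p) n) else {})"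

lemma af_scaled_diff_Qp:
  "a \<in> Af \<Longrightarrow> c \<in> Af \<Longrightarrow> prime p \<Longrightarrow> af_scaled_diff q a c p \<in> Qp p"
  unfolding af_scaled_diff_def by (simp add: pclass_in_Qp p_cauchy_scaled_diff Qp_prep Af_Qp)

lemma af_add_scaled_diff:
  assumes a: "a \<in> Af" and c: "c \<in> Af"
  shows "af_add c (af_scaled_diff q a c) = div_action (inverse q) a"
proof
  fix p show "af_add c (af_scaled_diff q a c) p = div_action (inverse q) a p"
  proof (cases "prime p")
    case True
    note ap = Qp_prep[OF True Af_Qp[OF a True]] and cp = Qp_prep[OF True Af_Qp[OF c True]]
    show ?thesis
      using padd_pclass_scaled_diff[OF True ap(1) cp(1), of q] ap(2) cp(2)
      by (simp add: True af_add_prime af_scaled_diff_def div_action_prime)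
  qed (simp add: af_add_def div_action_nonprime)
qed

lemma exists_pos_rat_af_scaled_diff_small:
  assumes a: "a \<in> Af" and c: "c \<in> Af" and sub: "S_zero a \<subseteq> S_zero c"
    and F: "finite F" "F \<subseteq> {p. prime p}" and \<epsilon>: "\<forall>p\<in>F. \<epsilon> p > 0"
  shows "\<exists>q>0. \<forall>p. prime p \<longrightarrow> (p \<in> F \<longrightarrow> pnorm p (af_scaled_diff q a c p) < \<epsilon> p)
                              \<and> (p \<notin> F \<longrightarrow> pnorm p (af_scaled_diff q a c p) \<le> 1)"
proof -
  let ?s = "\<lambda>p. prep (a p)" and ?t = "\<lambda>p. prep (c p)"
  let ?n = "\<lambda>q p. pclass p (\<lambda>m. q * ?s p m - ?t p m)"
  have s: "p_cauchy p (?s p)" "pclass p (?s p) = a p" if "prime p" for p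
    using Qp_prep[OF that Af_Qp[OF a that]] by auto
  have t: "p_cauchy p (?t p)" "pclass p (?t p) = c p" if "prime p" for p
    using Qp_prep[OF that Af_Qp[OF c that]] by auto
  \<comment> \<open>outside F' both a and c are integral, so any q integral there keeps q a - c integral\<close>
  define F' where "F' = F \<union> {p. prime p \<and> a p \<notin> Zp p} \<union> {p. prime p \<and> c p \<notin> Zp p}"
  define \<epsilon>' where "\<epsilon>' p = (if p \<in> F then \<epsilon> p else 1)" for p
  define P where "P = {p \<in> F'. a p \<noteq> pzero p}"
  have \<epsilon>': "\<epsilon>' p > 0" for p unfolding \<epsilon>'_def using \<epsilon> by auto
  have P: "finite P" "\<forall>p\<in>P. prime p"
    unfolding P_def F'_def using F Af_finite_nonintegral[OF a] Af_finite_nonintegral[OF c] by auto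
  have "\<forall>p\<in>P. p_cauchy p (?s p) \<and> p_cauchy p (?t p) \<and> pclass p (?s p) \<noteq> pzero p"
    using P(2) s t unfolding P_def by auto
  moreover have "\<forall>p\<in>P. \<epsilon>' p > 0" using \<epsilon>' by simp
  ultimately have "\<exists>q>0. (\<forall>p\<in>P. pnorm p (?n q p) < \<epsilon>' p) \<and> (\<forall>l. prime l \<and> l \<notin> P \<longrightarrow> pabs l q \<le> 1)"
    by (rule exists_pos_rat_scaled_diffs_small[OF P])
  then obtain q where q: "q > 0" "\<forall>p\<in>P. pnorm p (?n q p) < \<epsilon>' p"
    "\<forall>l. prime l \<and> l \<notin> P \<longrightarrow> pabs l q \<le> 1"
    by blast
  have in_F': "pnorm p (?n q p) < \<epsilon>' p" if p: "prime p" "p \<in> F'" for p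
  proof (cases "p \<in> P")
    case False
    hence "a p = pzero p" "c p = pzero p" using p sub unfolding P_def S_zero_def by auto
    hence "pclass p (?s p) = pzero p" "pclass p (?t p) = pzero p"
      using trans[OF s(2)[OF p(1)]] trans[OF t(2)[OF p(1)]] by blast+
    hence "pnorm p (?n q p) = 0" by (intro pnorm_scaled_diff_pzero s(1) t(1) p(1))
    thus ?thesis using \<epsilon>'[of p] by simp
  qed (use q(2) in blast)
  have out_F': "pnorm p (?n q p) \<le> 1" if p: "prime p" "p \<notin> F'" for p
    using p q(3) s t Af_Qp[OF a] Af_Qp[OF c] unfolding F'_def P_def Zp_def
    by (intro pnorm_scaled_diff_le_1) auto
  have "(p \<in> F \<longrightarrow> pnorm p (?n q p) < \<epsilon> p) \<and> (p \<notin> F \<longrightarrow> pnorm p (?n q p) \<le> 1)"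
    if p: "prime p" for p
    using in_F'[OF p] out_F'[OF p] unfolding F'_def \<epsilon>'_def by (cases "p \<in> F'") (auto simp: F'_def)
  thus ?thesis using q(1) unfolding af_scaled_diff_def by auto
qed

lemma in_closure_div_orbit:
  assumes a: "a \<in> Af" and c: "c \<in> Af" and sub: "S_zero a \<subseteq> S_zero c"
  shows "c \<in> Af_top closure_of div_orbit a"
  unfolding in_closure_of topspace_Af_top
proof (intro conjI allI impI)
  fix T assume "c \<in> T \<and> openin Af_top T"
  hence "af_open T" "c \<in> T" by (simp_all add: openin_Af_top)
  then obtain F V where F: "finite F" "F \<subseteq> {p. prime p}" "\<forall>p\<in>F. qp_nhd0 p (V p)"
    and FV: "af_add c ` af_nbhd F V \<subseteq> T"
    by (rule af_openD)
  obtain \<epsilon> where \<epsilon>: "\<forall>p\<in>F. \<epsilon> p > 0 \<and> {x \<in> Qp p. pnorm p x < \<epsilon> p} \<subseteq> V p"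
    using F(3) by (rule qp_nhd0_radii)
  have "\<forall>p\<in>F. \<epsilon> p > 0" using \<epsilon> by simp
  from exists_pos_rat_af_scaled_diff_small[OF a c sub F(1,2) this] obtain q
    where q: "q > 0" "\<And>p. prime p \<Longrightarrow> p \<in> F \<Longrightarrow> pnorm p (af_scaled_diff q a c p) < \<epsilon> p"
      "\<And>p. prime p \<Longrightarrow> p \<notin> F \<Longrightarrow> pnorm p (af_scaled_diff q a c p) \<le> 1"
    by auto
  have "af_scaled_diff q a c \<in> af_nbhd F V"
  proof (rule af_nbhdI[OF F(2,1)])
    show "\<forall>p\<in>F. {x \<in> Qp p. pnorm p x < \<epsilon> p} \<subseteq> V p" using \<epsilon> by simp
    show "af_scaled_diff q a c p \<in> Qp p" if "prime p" for p using af_scaled_diff_Qp[OF a c that] .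
    show "af_scaled_diff q a c p = {}" if "\<not> prime p" for p using that by (simp add: af_scaled_diff_def)
    show "pnorm p (af_scaled_diff q a c p) < \<epsilon> p" if "p \<in> F" for p
      using q(2) F(2) that by blast
    show "pnorm p (af_scaled_diff q a c p) \<le> 1" if "prime p" "p \<notin> F" for p
      using q(3) that by blast
  qed
  hence "af_add c (af_scaled_diff q a c) \<in> T" using FV by blast
  hence "div_action (inverse q) a \<in> T" by (simp only: af_add_scaled_diff[OF a c])
  moreover have "div_action (inverse q) a \<in> div_orbit a"
    unfolding div_orbit_def by (rule imageI) (simp add: q(1))
  ultimately show "\<exists>y. y \<in> div_orbit a \<and> y \<in> T" by blast
qed (rule c)

lemma closure_div_orbit:
  assumes "a \<in> Af"
  shows "Af_top closure_of div_orbit a = {c \<in> Af. S_zero a \<subseteq> S_zero c}"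
proof
  show "Af_top closure_of div_orbit a \<subseteq> {c \<in> Af. S_zero a \<subseteq> S_zero c}"
    using S_zero_subset_closure_div_orbit[OF assms] closure_of_subset_topspace[of Af_top "div_orbit a"]
    unfolding topspace_Af_top by blast
  show "{c \<in> Af. S_zero a \<subseteq> S_zero c} \<subseteq> Af_top closure_of div_orbit a"
    using in_closure_div_orbit[OF assms] by blast
qed

lemma qo_rel_div_action: "qo_rel Af_top {r::rat. r > 0} div_action = fibre_rel Af_top S_zero"
proof -
  have "Af_top closure_of div_orbit a = Af_top closure_of div_orbit b \<longleftrightarrow> S_zero a = S_zero b"
    if "a \<in> Af" "b \<in> Af" for a b
    unfolding closure_div_orbit[OF that(1)] closure_div_orbit[OF that(2)] using that by blast
  thus ?thesis unfolding qo_rel_def fibre_rel_def div_orbit_def[symmetric] topspace_Af_top by auto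
qed

definition af_zero_on :: "nat set \<Rightarrow> adele" where
  "af_zero_on T = (\<lambda>p. if prime p then if p \<in> T then pzero p else pconst p 1 else {})"

lemma af_zero_on_in_Af: "af_zero_on T \<in> Af"
proof (rule AfI)
  show "af_zero_on T p \<in> Qp p" if "prime p" for p
    unfolding af_zero_on_def using that pzero_in_Qp pconst_in_Qp by simp
  show "af_zero_on T p = {}" if "\<not> prime p" for p
    unfolding af_zero_on_def using that by simp
  have "af_zero_on T p \<in> Zp p" if "prime p" for p
    unfolding af_zero_on_def Zp_def using that pzero_in_Qp pconst_in_Qp pnorm_pzero pnorm_pconst by simp
  hence "{p. prime p \<and> af_zero_on T p \<notin> Zp p} = {}" by blast
  thus "finite {p. prime p \<and> af_zero_on T p \<notin> Zp p}" by (simp only: finite.emptyI)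
qed

lemma S_zero_af_zero_on: "S_zero (af_zero_on T) = T \<inter> {p. prime p}"
  unfolding S_zero_def af_zero_on_def using pconst_neq_pzero[of _ 1] by auto

lemma image_S_zero: "S_zero ` topspace Af_top = topspace power_cofinite"
proof
  show "S_zero ` topspace Af_top \<subseteq> topspace power_cofinite"
    unfolding topspace_power_cofinite using S_zero_subset_primes by blast
  show "topspace power_cofinite \<subseteq> S_zero ` topspace Af_top"
  proof
    fix T assume "T \<in> topspace power_cofinite"
    hence "T = S_zero (af_zero_on T)" unfolding topspace_power_cofinite S_zero_af_zero_on by blast
    thus "T \<in> S_zero ` topspace Af_top" unfolding topspace_Af_top using af_zero_on_in_Af by blast
  qed
qed

lemma continuous_map_S_zero: "continuous_map Af_top power_cofinite S_zero"
  unfolding continuous_map_def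
proof (intro conjI allI impI)
  show "S_zero \<in> topspace Af_top \<rightarrow> topspace power_cofinite" using image_S_zero by blast
  fix U assume "openin power_cofinite U"
  hence U: "power_cofinite_open {p. prime p} U" by (simp add: openin_power_cofinite)
  show "openin Af_top {a \<in> topspace Af_top. S_zero a \<in> U}"
  proof (subst openin_subopen, intro ballI)
    fix a assume a: "a \<in> {a \<in> topspace Af_top. S_zero a \<in> U}"
    obtain G where G: "finite G" "G \<subseteq> {p. prime p}" "S_zero a \<inter> G = {}"
      "{T \<in> Pow {p. prime p}. T \<inter> G = {}} \<subseteq> U"
      using U by (rule power_cofinite_openD) (use a in blast)
    have "a p \<noteq> pzero p" if "p \<in> G" for p using G(2,3) that unfolding S_zero_def by blast
    hence "a \<in> af_nonzero_at G" using a unfolding af_nonzero_at_def topspace_Af_top by blast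
    moreover have "af_nonzero_at G \<subseteq> {a \<in> topspace Af_top. S_zero a \<in> U}"
    proof
      fix x assume x: "x \<in> af_nonzero_at G"
      hence "S_zero x \<inter> G = {}" unfolding af_nonzero_at_def S_zero_def by blast
      hence "S_zero x \<in> U" using G(4) S_zero_subset_primes[of x] by blast
      thus "x \<in> {a \<in> topspace Af_top. S_zero a \<in> U}" using x unfolding af_nonzero_at_def topspace_Af_top by blast
    qed
    ultimately show "\<exists>T. openin Af_top T \<and> a \<in> T \<and> T \<subseteq> {a \<in> topspace Af_top. S_zero a \<in> U}"
      using openin_af_nonzero_at[OF G(1,2)] by blast
  qed
qed

lemma exists_af_nbhd_S_zero_eq:
  assumes a: "a \<in> Af" and F: "finite F" "F \<subseteq> {p. prime p}"
    and \<epsilon>: "\<forall>p\<in>F. \<epsilon> p > 0 \<and> {x \<in> Qp p. pnorm p x < \<epsilon> p} \<subseteq> V p"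
    and T: "T \<subseteq> {p. prime p}" "\<forall>p\<in>T. p \<in> F \<or> a p \<notin> Zp p \<longrightarrow> a p = pzero p"
  shows "\<exists>n \<in> af_nbhd F V. S_zero (af_add a n) = T"
proof -
  obtain K where K: "\<forall>p\<in>F. (1/2::real) ^ K < \<epsilon> p" using exists_half_power_less[OF F(1)] \<epsilon> by blast
  \<comment> \<open>cancel a on T, and off T turn zero components into the small nonzero p^K\<close>
  define n :: adele where "n p = (if prime p then if p \<in> T then pneg p (a p)
      else if a p = pzero p then pconst p (of_nat p ^ K) else pzero p else {})" for p
  have n_Qp: "n p \<in> Qp p" if "prime p" for p
    unfolding n_def using that pneg_in_Qp[OF that Af_Qp[OF a that]] pconst_in_Qp pzero_in_Qp by simp
  have n_small: "pnorm p (n p) \<le> 1 \<and> (p \<in> F \<longrightarrow> pnorm p (n p) < \<epsilon> p)" if p: "prime p" for p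
  proof (cases "p \<in> T")
    case True
    hence "n p = pneg p (a p)" unfolding n_def using p by simp
    hence "pnorm p (n p) = pnorm p (a p)" using pnorm_pneg[OF p Af_Qp[OF a p]] by simp
    moreover have "pnorm p (a p) = 0 \<or> (pnorm p (a p) \<le> 1 \<and> p \<notin> F)"
      using T(2) True pnorm_pzero[OF p] unfolding Zp_def by auto
    ultimately show ?thesis using \<epsilon> by auto
  next
    case False
    have "pnorm p (n p) \<le> (1/2) ^ K"
      using False p pnorm_pconst[OF p] pabs_prime_power_self[OF p] pnorm_pzero[OF p] by (simp add: n_def)
    moreover have "(1/2::real) ^ K \<le> 1" by (simp add: power_le_one)
    ultimately show ?thesis using K by fastforce
  qed
  have "n \<in> af_nbhd F V"
  proof (rule af_nbhdI[OF F(2,1)])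
    show "\<forall>p\<in>F. {x \<in> Qp p. pnorm p x < \<epsilon> p} \<subseteq> V p" using \<epsilon> by simp
    show "n p \<in> Qp p" if "prime p" for p using n_Qp[OF that] .
    show "n p = {}" if "\<not> prime p" for p using that by (simp add: n_def)
    show "pnorm p (n p) < \<epsilon> p" if "p \<in> F" for p using n_small F(2) that by blast
    show "pnorm p (n p) \<le> 1" if "prime p" "p \<notin> F" for p using n_small that by blast
  qed
  moreover have "af_add a n p = pzero p \<longleftrightarrow> p \<in> T" if p: "prime p" for p
    using p padd_pneg[OF p Af_Qp[OF a p]] padd_pzero_pconst[OF p] padd_pzero_right[OF p Af_Qp[OF a p]]
      pconst_neq_pzero[OF p] prime_gt_0_nat[OF p]
    by (auto simp: af_add_prime n_def)
  hence "S_zero (af_add a n) = T" unfolding S_zero_def using T(1) by blast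
  ultimately show ?thesis by blast
qed

lemma open_map_S_zero: "open_map Af_top power_cofinite S_zero"
  unfolding open_map_def openin_power_cofinite
proof (intro allI impI power_cofinite_openI)
  fix W assume W: "openin Af_top W"
  hence "W \<subseteq> Af" and W': "af_open W" using openin_Af_top af_open_def by auto
  thus "S_zero ` W \<subseteq> Pow {p. prime p}" using S_zero_subset_primes by blast
  fix X assume "X \<in> S_zero ` W"
  then obtain a where a: "a \<in> W" "X = S_zero a" by blast
  obtain F V where F: "finite F" "F \<subseteq> {p. prime p}" "\<forall>p\<in>F. qp_nhd0 p (V p)"
    and FV: "af_add a ` af_nbhd F V \<subseteq> W"
    using W' a(1) by (rule af_openD)
  obtain \<epsilon> where \<epsilon>: "\<forall>p\<in>F. \<epsilon> p > 0 \<and> {x \<in> Qp p. pnorm p x < \<epsilon> p} \<subseteq> V p"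
    using F(3) by (rule qp_nhd0_radii)
  define G where "G = (F \<union> {p. prime p \<and> a p \<notin> Zp p}) - S_zero a"
  have "finite G" "G \<subseteq> {p. prime p}" "X \<inter> G = {}"
    unfolding G_def a(2) using F Af_finite_nonintegral \<open>W \<subseteq> Af\<close> a(1) by auto
  moreover have "{T \<in> Pow {p. prime p}. T \<inter> G = {}} \<subseteq> S_zero ` W"
  proof
    fix T assume "T \<in> {T \<in> Pow {p. prime p}. T \<inter> G = {}}"
    hence "T \<subseteq> {p. prime p}" "\<forall>p\<in>T. p \<in> F \<or> a p \<notin> Zp p \<longrightarrow> a p = pzero p"
      unfolding G_def S_zero_def by auto
    then obtain n where "n \<in> af_nbhd F V" "S_zero (af_add a n) = T"
      using exists_af_nbhd_S_zero_eq[OF _ F(1,2) \<epsilon>] a(1) \<open>W \<subseteq> Af\<close> by blast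
    thus "T \<in> S_zero ` W" using FV by blast
  qed
  ultimately show "\<exists>G. finite G \<and> G \<subseteq> {p. prime p} \<and> X \<inter> G = {} \<and> {T \<in> Pow {p. prime p}. T \<inter> G = {}} \<subseteq> S_zero ` W"
    by blast
qed

theorem proposition2p4:
  shows "(\<forall>a b. (a, b) \<in> qo_rel Af_top {r::rat. r > 0} div_action \<longrightarrow> S_zero a = S_zero b)
    \<and> homeomorphic_map (quasi_orbit_space Af_top {r::rat. r > 0} div_action) power_cofinite
        (\<lambda>C. S_zero (SOME a. a \<in> C))"
proof
  show "\<forall>a b. (a, b) \<in> qo_rel Af_top {r::rat. r > 0} div_action \<longrightarrow> S_zero a = S_zero b"
    unfolding qo_rel_div_action fibre_rel_def by blast
  have "quasi_orbit_space Af_top {r::rat. r > 0} div_action = class_topology Af_top (fibre_rel Af_top S_zero)"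
    unfolding quasi_orbit_space_def class_topology_def qo_rel_div_action ..
  thus "homeomorphic_map (quasi_orbit_space Af_top {r::rat. r > 0} div_action) power_cofinite
        (\<lambda>C. S_zero (SOME a. a \<in> C))"
    using homeomorphic_map_fibre_classes[OF continuous_map_S_zero open_map_S_zero image_S_zero] by simp
qed

end
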